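(* Let $A$ be a general event structure and let $\mathit{er}(A)=(P,\le_P,\mathrm{Con}_P,\equiv_P)$ be as defined in the context. Then the set of configurations of $(P,\le_P,\mathrm{Con}_P)$, ordered by inclusion, is order-isomorphic to the order of extremal realisations of $\mathcal{C}^\infty(A)$. Explicitly: an extremal realisation $\rho$ corresponds (up to isomorphism of realisations) to the configuration $\{p\in P \mid p\preceq\rho\}$ of $P$; conversely a configuration $x$ of $P$ corresponds to the extremal realisation with carrier $(x,\le_P\restriction x)$ and function $\max_A : x\to A$.
   Context: A general event structure is $(E,\mathrm{Con},\vdash)$ where $E$ is a set, $\mathrm{Con}$ is a nonempty family of finite subsets of $E$ closed under subsets, and $\vdash\subseteq \mathrm{Con}\times E$ satisfies: $Y\in\mathrm{Con}$, $X\subseteq Y$, $X\vdash e$ imply $Y\vdash e$. A configuration is a subset $x\subseteq E$ which is consistent (every finite subset lies in $\mathrm{Con}$) and secured (for every $e\in x$ there are $e_1,\dots,e_n\in x$ with $e_n=e$ and $\{e_1,\dots,e_{i-1}\}\vdash e_i$ for all $i\le n$). $\mathcal{C}^\infty(A)$ denotes the set of configurations of $A$. Causal realisations: Let $\mathcal A$ be a family of sets with underlying set $A=\bigcup\mathcal A$. A (causal) realisation of $\mathcal A$ is a partial order $(E,\le)$ (its carrier) in which $\{e'\mid e'\le e\}$ is finite for all $e$, with a function $\rho:E\to A$ such that $\rho x\in\mathcal A$ for every down-closed $x\subseteq E$. A map of realisations from $(E,\le),\rho$ to $(E',\le'),\rho'$ is a partial surjective function $f:E\rightharpoonup E'$ sending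 down-closed subsets to down-closed subsets with $\rho(e)=\rho'(f(e))$ whenever $f(e)$ is defined; write $\rho\succeq\rho'$ (equivalently $\rho'\preceq\rho$) if such a map exists. A map is total if $f$ is a total function. A realisation $\rho$ is extremal if every total map of realisations out of $\rho$ is an isomorphism of realisations. The order of extremal realisations has as elements isomorphism classes of extremal realisations, ordered by $\preceq$ between representatives. A realisation has a top element if its carrier has an element above all others. $\mathit{er}(A)$: $P$ consists of one chosen representative from each isomorphism class of extremal realisations of $\mathcal{C}^\infty(A)$ having a top element; for $p\in P$, $\max_A(p)\in A$ is the image under the realisation's function of its top element. $p\le_P p'$ iff $p\preceq p'$. A finite $X\subseteq P$ is in $\mathrm{Con}_P$ iff $\max_A[X]\in\mathcal{C}^\infty(A)$, where $[X]$ is the $\le_P$-down-closure of $X$. $p_1\equiv_P p_2$ iff $\max_A(p_1)=\max_A(p_2)$. A configuration of $(P,\le_P,\mathrm{Con}_P)$ is a down-closed subset all of whose finite subsets are in $\mathrm{Con}_P$. *)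

theory Defs
  imports Main
begin

text \<open>A general event structure (E, Con, entailment). Entailment is a predicate
  ent X e meaning X |- e.\<close>

definition ges :: "'a set \<Rightarrow> 'a set set \<Rightarrow> ('a set \<Rightarrow> 'a \<Rightarrow> bool) \<Rightarrow> bool" where
  "ges E Con ent \<longleftrightarrow>
     Con \<noteq> {} \<and>
     (\<forall>X\<in>Con. finite X \<and> X \<subseteq> E) \<and>
     (\<forall>X\<in>Con. \<forall>Y. Y \<subseteq> X \<longrightarrow> Y \<in> Con) \<and>
     (\<forall>X e. ent X e \<longrightarrow> X \<in> Con \<and> e \<in> E) \<and>
     (\<forall>X Y e. Y \<in> Con \<longrightarrow> X \<subseteq> Y \<longrightarrow> ent X e \<longrightarrow> ent Y e)"

definition configs :: "'a set \<Rightarrow> 'a set set \<Rightarrow> ('a set \<Rightarrow> 'a \<Rightarrow> bool) \<Rightarrow> 'a set set" where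
  "configs E Con ent =
     {x. (\<forall>F. finite F \<and> F \<subseteq> x \<longrightarrow> F \<in> Con) \<and>
         (\<forall>e\<in>x. \<exists>es. es \<noteq> [] \<and> last es = e \<and> set es \<subseteq> x \<and>
                   (\<forall>i<length es. ent (set (take i es)) (es ! i)))}"

text \<open>A candidate realisation: a carrier set, an order relation on it (only its
  values on the carrier matter) and a labelling function.\<close>

record ('e, 'a) real =
  carrier :: "'e set"
  rord :: "'e \<Rightarrow> 'e \<Rightarrow> bool"
  lab :: "'e \<Rightarrow> 'a"

definition down_closed :: "('e, 'a) real \<Rightarrow> 'e set \<Rightarrow> bool" where
  "down_closed R x \<longleftrightarrow> x \<subseteq> carrier R \<and>
     (\<forall>e\<in>x. \<forall>e'\<in>carrier R. rord R e' e \<longrightarrow> e' \<in> x)"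

definition is_realisation :: "'a set set \<Rightarrow> ('e, 'a) real \<Rightarrow> bool" where
  "is_realisation Fam R \<longleftrightarrow>
     (\<forall>e\<in>carrier R. rord R e e) \<and>
     (\<forall>e\<in>carrier R. \<forall>e'\<in>carrier R. rord R e e' \<and> rord R e' e \<longrightarrow> e = e') \<and>
     (\<forall>e1\<in>carrier R. \<forall>e2\<in>carrier R. \<forall>e3\<in>carrier R.
        rord R e1 e2 \<and> rord R e2 e3 \<longrightarrow> rord R e1 e3) \<and>
     (\<forall>e\<in>carrier R. finite {e'\<in>carrier R. rord R e' e}) \<and>
     (\<forall>e\<in>carrier R. lab R e \<in> \<Union>Fam) \<and>
     (\<forall>x. down_closed R x \<longrightarrow> lab R ` x \<in> Fam)"

definition rmap :: "'a set set \<Rightarrow> ('e, 'a) real \<Rightarrow> ('f, 'a) real \<Rightarrow> ('e \<Rightarrow> 'f option) \<Rightarrow> bool" where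
  "rmap Fam R R' f \<longleftrightarrow>
     is_realisation Fam R \<and> is_realisation Fam R' \<and>
     (\<forall>e. f e \<noteq> None \<longrightarrow> e \<in> carrier R) \<and>
     (\<forall>e e'. f e = Some e' \<longrightarrow> e' \<in> carrier R') \<and>
     (\<forall>e'\<in>carrier R'. \<exists>e\<in>carrier R. f e = Some e') \<and>
     (\<forall>x. down_closed R x \<longrightarrow> down_closed R' {e'. \<exists>e\<in>x. f e = Some e'}) \<and>
     (\<forall>e e'. f e = Some e' \<longrightarrow> lab R e = lab R' e')"

text \<open>rle Fam R R' means R \<preceq> R', i.e. there is a map of realisations from R' to R.\<close>

definition rle :: "'a set set \<Rightarrow> ('e, 'a) real \<Rightarrow> ('f, 'a) real \<Rightarrow> bool" where
  "rle Fam R R' \<longleftrightarrow> (\<exists>f. rmap Fam R' R f)"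

definition total_map :: "('e, 'a) real \<Rightarrow> ('e \<Rightarrow> 'f option) \<Rightarrow> bool" where
  "total_map R f \<longleftrightarrow> (\<forall>e\<in>carrier R. f e \<noteq> None)"

definition riso_fun :: "('e, 'a) real \<Rightarrow> ('f, 'a) real \<Rightarrow> ('e \<Rightarrow> 'f) \<Rightarrow> bool" where
  "riso_fun R R' g \<longleftrightarrow>
     bij_betw g (carrier R) (carrier R') \<and>
     (\<forall>e1\<in>carrier R. \<forall>e2\<in>carrier R. rord R e1 e2 \<longleftrightarrow> rord R' (g e1) (g e2)) \<and>
     (\<forall>e\<in>carrier R. lab R' (g e) = lab R e)"

definition riso :: "'a set set \<Rightarrow> ('e, 'a) real \<Rightarrow> ('f, 'a) real \<Rightarrow> bool" where
  "riso Fam R R' \<longleftrightarrow> is_realisation Fam R \<and> is_realisation Fam R' \<and> (\<exists>g. riso_fun R R' g)"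

definition iso_map :: "('e, 'a) real \<Rightarrow> ('f, 'a) real \<Rightarrow> ('e \<Rightarrow> 'f option) \<Rightarrow> bool" where
  "iso_map R R' f \<longleftrightarrow> (\<exists>g. (\<forall>e\<in>carrier R. f e = Some (g e)) \<and> riso_fun R R' g)"

text \<open>Since a total map is
  surjective, its target is isomorphic to a realisation whose carrier lives in
  the same type as that of R, so quantifying over such targets suffices.\<close>

definition extremal :: "'a set set \<Rightarrow> ('e, 'a) real \<Rightarrow> bool" where
  "extremal Fam R \<longleftrightarrow> is_realisation Fam R \<and>
     (\<forall>(R' :: ('e, 'a) real) f. rmap Fam R R' f \<and> total_map R f \<longrightarrow> iso_map R R' f)"

definition has_top :: "('e, 'a) real \<Rightarrow> bool" where
  "has_top R \<longleftrightarrow> (\<exists>t\<in>carrier R. \<forall>e\<in>carrier R. rord R e t)"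

definition maxA :: "('e, 'a) real \<Rightarrow> 'a" where
  "maxA R = lab R (THE t. t \<in> carrier R \<and> (\<forall>e\<in>carrier R. rord R e t))"

text \<open>P is a set of representatives (with carriers in nat; every finite
  realisation is isomorphic to one with carrier in nat) of the isomorphism classes
  of extremal realisations with a top element.\<close>

definition er_reps :: "'a set set \<Rightarrow> (nat, 'a) real set \<Rightarrow> bool" where
  "er_reps Fam P \<longleftrightarrow>
     (\<forall>p\<in>P. extremal Fam p \<and> has_top p) \<and>
     (\<forall>R :: (nat, 'a) real. extremal Fam R \<and> has_top R \<longrightarrow> (\<exists>!p. p \<in> P \<and> riso Fam R p))"

definition downP :: "'a set set \<Rightarrow> (nat, 'a) real set \<Rightarrow> (nat, 'a) real set \<Rightarrow> (nat, 'a) real set" where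
  "downP Fam P X = {p\<in>P. \<exists>q\<in>X. rle Fam p q}"

definition ConP :: "'a set set \<Rightarrow> (nat, 'a) real set \<Rightarrow> (nat, 'a) real set \<Rightarrow> bool" where
  "ConP Fam P X \<longleftrightarrow> finite X \<and> X \<subseteq> P \<and> maxA ` downP Fam P X \<in> Fam"

definition configsP :: "'a set set \<Rightarrow> (nat, 'a) real set \<Rightarrow> (nat, 'a) real set set" where
  "configsP Fam P = {x. x \<subseteq> P \<and> (\<forall>p\<in>x. \<forall>p'\<in>P. rle Fam p' p \<longrightarrow> p' \<in> x) \<and>
                        (\<forall>X. finite X \<and> X \<subseteq> x \<longrightarrow> ConP Fam P X)}"

definition real_of_config :: "'a set set \<Rightarrow> (nat, 'a) real set \<Rightarrow> ((nat, 'a) real, 'a) real" where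
  "real_of_config Fam x = \<lparr>carrier = x, rord = rle Fam, lab = maxA\<rparr>"

end

theory Submission
  imports Defs
begin

text \<open>An extremal realisation R is determined by its histories: the restriction of R below an
  event e is again extremal (a total map out of it could be glued back into R) and has a top, so
  it is isomorphic to a unique p in P. Sending e to this representative is an isomorphism of R
  onto the realisation carried by the configuration {p \<in> P. p \<preceq> R}. It reflects the order
  because p \<preceq> R holds exactly when p is isomorphic to the restriction below some event (maps
  out of extremal realisations have down-closed domains), and it is injective because distinct
  events of an extremal realisation cannot have isomorphic histories (merging them would be a
  total map that is not an isomorphism). Conversely, for a configuration x of P the realisation
  (x, \<preceq>, maxA) is a realisation by coherence of the family of configurations, and it is extremal
  since a total map out of it is an isomorphism on the restriction below each q \<in> x, which is
  isomorphic to q itself.\<close>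

section \<open>Realisations, their maps and isomorphisms\<close>

abbreviation below :: "('e, 'a) real \<Rightarrow> 'e \<Rightarrow> 'e set" where
  "below R e \<equiv> {u \<in> carrier R. rord R u e}"

abbreviation pimage :: "('e \<Rightarrow> 'f option) \<Rightarrow> 'e set \<Rightarrow> 'f set" where
  "pimage f x \<equiv> {e'. \<exists>e\<in>x. f e = Some e'}"

lemma realisationD:
  assumes "is_realisation Fam R"
  shows "\<And>e. e \<in> carrier R \<Longrightarrow> rord R e e"
    "\<And>e e'. e \<in> carrier R \<Longrightarrow> e' \<in> carrier R \<Longrightarrow> rord R e e' \<Longrightarrow> rord R e' e \<Longrightarrow> e = e'"
    "\<And>e1 e2 e3. e1 \<in> carrier R \<Longrightarrow> e2 \<in> carrier R \<Longrightarrow> e3 \<in> carrier R \<Longrightarrow>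
       rord R e1 e2 \<Longrightarrow> rord R e2 e3 \<Longrightarrow> rord R e1 e3"
    "\<And>e. e \<in> carrier R \<Longrightarrow> finite (below R e)"
    "\<And>e. e \<in> carrier R \<Longrightarrow> lab R e \<in> \<Union>Fam"
    "\<And>x. down_closed R x \<Longrightarrow> lab R ` x \<in> Fam"
  using assms unfolding is_realisation_def by blast+

lemma is_realisationI:
  assumes "\<And>e. e \<in> carrier R \<Longrightarrow> rord R e e"
    "\<And>e e'. e \<in> carrier R \<Longrightarrow> e' \<in> carrier R \<Longrightarrow> rord R e e' \<Longrightarrow> rord R e' e \<Longrightarrow> e = e'"
    "\<And>e1 e2 e3. e1 \<in> carrier R \<Longrightarrow> e2 \<in> carrier R \<Longrightarrow> e3 \<in> carrier R \<Longrightarrow>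
       rord R e1 e2 \<Longrightarrow> rord R e2 e3 \<Longrightarrow> rord R e1 e3"
    "\<And>e. e \<in> carrier R \<Longrightarrow> finite (below R e)"
    "\<And>e. e \<in> carrier R \<Longrightarrow> lab R e \<in> \<Union>Fam"
    "\<And>x. down_closed R x \<Longrightarrow> lab R ` x \<in> Fam"
  shows "is_realisation Fam R"
  using assms unfolding is_realisation_def by blast

lemma rmapD:
  assumes "rmap Fam R R' f"
  shows "is_realisation Fam R" "is_realisation Fam R'"
    "\<And>e. f e \<noteq> None \<Longrightarrow> e \<in> carrier R"
    "\<And>e e'. f e = Some e' \<Longrightarrow> e' \<in> carrier R'"
    "\<And>e'. e' \<in> carrier R' \<Longrightarrow> \<exists>e\<in>carrier R. f e = Some e'"
    "\<And>x. down_closed R x \<Longrightarrow> down_closed R' (pimage f x)"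
    "\<And>e e'. f e = Some e' \<Longrightarrow> lab R e = lab R' e'"
  using assms unfolding rmap_def by blast+

lemma riso_funD:
  assumes "riso_fun R R' g"
  shows "bij_betw g (carrier R) (carrier R')"
    "\<And>e1 e2. e1 \<in> carrier R \<Longrightarrow> e2 \<in> carrier R \<Longrightarrow> rord R e1 e2 \<longleftrightarrow> rord R' (g e1) (g e2)"
    "\<And>e. e \<in> carrier R \<Longrightarrow> lab R' (g e) = lab R e"
  using assms unfolding riso_fun_def by blast+

lemma down_closed_below:
  assumes "is_realisation Fam R" "e \<in> carrier R"
  shows "down_closed R (below R e)"
  unfolding down_closed_def using realisationD(3)[OF assms(1) _ _ assms(2)] by blast

definition down_closure :: "('e, 'a) real \<Rightarrow> 'e set \<Rightarrow> 'e set" where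
  "down_closure R z = {u \<in> carrier R. \<exists>v\<in>z. rord R u v}"

lemma down_closed_down_closure:
  assumes "is_realisation Fam R" "z \<subseteq> carrier R"
  shows "down_closed R (down_closure R z)"
  using realisationD(3)[OF assms(1)] assms(2) unfolding down_closed_def down_closure_def by blast

lemma subset_down_closure:
  assumes "is_realisation Fam R" "z \<subseteq> carrier R"
  shows "z \<subseteq> down_closure R z"
  using realisationD(1)[OF assms(1)] assms(2) unfolding down_closure_def by blast

lemma riso_fun_id: "riso_fun R R id"
  unfolding riso_fun_def by auto

lemma riso_fun_comp:
  assumes g: "riso_fun A B g" and h: "riso_fun B C h"
  shows "riso_fun A C (h \<circ> g)"
proof -
  have gb: "bij_betw g (carrier A) (carrier B)" and hb: "bij_betw h (carrier B) (carrier C)"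
    using g h riso_funD by blast+
  have "g a \<in> carrier B" if "a \<in> carrier A" for a
    using gb that bij_betwE by blast
  then show ?thesis
    unfolding riso_fun_def using bij_betw_trans[OF gb hb] riso_funD(2,3)[OF g] riso_funD(2,3)[OF h]
    by auto
qed

lemma riso_fun_inv:
  assumes "riso_fun A B g"
  shows "riso_fun B A (inv_into (carrier A) g)"
proof -
  have b: "bij_betw g (carrier A) (carrier B)" using assms riso_funD by blast
  have bi: "bij_betw (inv_into (carrier A) g) (carrier B) (carrier A)"
    using b by (rule bij_betw_inv_into)
  have gi: "g (inv_into (carrier A) g y) = y" if "y \<in> carrier B" for y
    using b that by (meson bij_betw_inv_into_right)
  show ?thesis unfolding riso_fun_def
  proof (intro conjI ballI)
    fix e1 e2 assume "e1 \<in> carrier B" "e2 \<in> carrier B"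
    then show "rord B e1 e2 = rord A (inv_into (carrier A) g e1) (inv_into (carrier A) g e2)"
      using riso_funD(2)[OF assms] bi gi by (metis bij_betwE)
  next
    fix e assume "e \<in> carrier B"
    then show "lab A (inv_into (carrier A) g e) = lab B e"
      using riso_funD(3)[OF assms] bi gi by (metis bij_betwE)
  qed (fact bi)
qed

lemma down_closed_riso_fun_image:
  assumes g: "riso_fun A B g" and z: "down_closed A z"
  shows "down_closed B (g ` z)"
proof -
  have b: "bij_betw g (carrier A) (carrier B)" using g riso_funD by blast
  have zA: "z \<subseteq> carrier A" and zd: "\<forall>e\<in>z. \<forall>e'\<in>carrier A. rord A e' e \<longrightarrow> e' \<in> z"
    using z unfolding down_closed_def by auto
  have "e' \<in> g ` z" if e: "e \<in> g ` z" and e': "e' \<in> carrier B" "rord B e' e" for e e'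
  proof -
    obtain a where a: "a \<in> z" "e = g a" using e by blast
    obtain a' where a': "a' \<in> carrier A" "e' = g a'" using e'(1) b by (metis bij_betw_def imageE)
    have "rord A a' a" using riso_funD(2)[OF g] a a' e' zA by auto
    then show ?thesis using zd a a' by auto
  qed
  moreover have "g ` z \<subseteq> carrier B" using b zA by (metis bij_betw_def image_mono)
  ultimately show ?thesis unfolding down_closed_def by blast
qed

lemma realisation_riso_fun:
  assumes g: "riso_fun A B g" and A: "is_realisation Fam A"
  shows "is_realisation Fam B"
proof -
  have cb: "carrier B = g ` carrier A"
    using riso_funD(1)[OF g] by (simp add: bij_betw_def)
  note o = riso_funD(2)[OF g] and l = riso_funD(3)[OF g] and R = realisationD[OF A]
  show ?thesis
  proof (rule is_realisationI)
    fix e assume "e \<in> carrier B" then show "rord B e e" using cb o R(1) by auto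
  next
    fix e e' assume "e \<in> carrier B" "e' \<in> carrier B" "rord B e e'" "rord B e' e"
    moreover obtain a a' where "a \<in> carrier A" "a' \<in> carrier A" "e = g a" "e' = g a'"
      using cb calculation(1,2) by auto
    ultimately show "e = e'" using o R(2)[of a a'] by simp
  next
    fix e1 e2 e3 assume "e1 \<in> carrier B" "e2 \<in> carrier B" "e3 \<in> carrier B"
      "rord B e1 e2" "rord B e2 e3"
    moreover obtain a1 a2 a3 where
      "a1 \<in> carrier A" "a2 \<in> carrier A" "a3 \<in> carrier A" "e1 = g a1" "e2 = g a2" "e3 = g a3"
      using cb calculation(1-3) by auto
    ultimately show "rord B e1 e3" using o R(3)[of a1 a2 a3] by simp
  next
    fix e assume "e \<in> carrier B"
    then obtain a where a: "a \<in> carrier A" "e = g a" using cb by auto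
    have "below B e = g ` below A a" using a cb o by auto
    then show "finite (below B e)" using R(4)[OF a(1)] by simp
  next
    fix e assume "e \<in> carrier B" then show "lab B e \<in> \<Union>Fam" using cb l R(5) by auto
  next
    fix x assume dx: "down_closed B x"
    define z where "z = {a \<in> carrier A. g a \<in> x}"
    have "down_closed A z" using dx cb o unfolding down_closed_def z_def by auto
    moreover have "x = g ` z" using dx cb unfolding down_closed_def z_def by auto
    moreover have "lab B ` g ` z = lab A ` z" using l unfolding z_def by force
    ultimately show "lab B ` x \<in> Fam" using R(6) by simp
  qed
qed

lemma riso_refl: "is_realisation Fam R \<Longrightarrow> riso Fam R R"
  unfolding riso_def using riso_fun_id by blast

lemma riso_sym: "riso Fam A B \<Longrightarrow> riso Fam B A"
  unfolding riso_def using riso_fun_inv by blast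

lemma riso_trans: "riso Fam A B \<Longrightarrow> riso Fam B C \<Longrightarrow> riso Fam A C"
  unfolding riso_def using riso_fun_comp by blast

lemma riso_funI: "riso_fun A B g \<Longrightarrow> is_realisation Fam A \<Longrightarrow> riso Fam A B"
  unfolding riso_def using realisation_riso_fun by blast

lemma rmap_riso_fun:
  assumes g: "riso_fun A B g" and A: "is_realisation Fam A"
  shows "rmap Fam A B (\<lambda>a. if a \<in> carrier A then Some (g a) else None)"
proof -
  have b: "bij_betw g (carrier A) (carrier B)" using g riso_funD by blast
  have "pimage (\<lambda>a. if a \<in> carrier A then Some (g a) else None) x = g ` x"
    if "down_closed A x" for x
    using that unfolding down_closed_def by auto
  moreover have "\<exists>e\<in>carrier A. g e = e'" if "e' \<in> carrier B" for e'
    using b that by (metis bij_betw_def imageE)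
  moreover have "g e \<in> carrier B" if "e \<in> carrier A" for e
    using b that by (auto simp: bij_betw_def)
  ultimately show ?thesis
    unfolding rmap_def
    using A realisation_riso_fun[OF g A] riso_funD(3)[OF g] down_closed_riso_fun_image[OF g]
    by (auto split: if_splits)
qed

lemma rmap_comp:
  assumes g: "rmap Fam A B g" and f: "rmap Fam B C f"
  shows "rmap Fam A C (\<lambda>a. Option.bind (g a) f)"
  unfolding rmap_def
proof (intro conjI allI impI ballI)
  note F = rmapD[OF f] and G = rmapD[OF g]
  fix x assume "down_closed A x"
  then have "down_closed C (pimage f (pimage g x))" using F(6) G(6) by blast
  moreover have "pimage f (pimage g x) = pimage (\<lambda>a. Option.bind (g a) f) x"
    by (auto split: Option.bind_splits)
  ultimately show "down_closed C (pimage (\<lambda>a. Option.bind (g a) f) x)" by simp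
next
  note F = rmapD[OF f] and G = rmapD[OF g]
  fix c assume "c \<in> carrier C"
  then obtain b where "b \<in> carrier B" "f b = Some c" using F(5) by blast
  moreover obtain a where "a \<in> carrier A" "g a = Some b" using G(5) calculation by blast
  ultimately show "\<exists>a\<in>carrier A. Option.bind (g a) f = Some c" by force
qed (use rmapD[OF f] rmapD[OF g] in \<open>auto split: Option.bind_splits\<close>)

lemma rle_trans: "rle Fam A B \<Longrightarrow> rle Fam B C \<Longrightarrow> rle Fam A C"
  unfolding rle_def using rmap_comp by blast

lemma riso_rle:
  assumes "riso Fam A B"
  shows "rle Fam A B" "rle Fam B A"
proof -
  obtain g where g: "riso_fun A B g" and A: "is_realisation Fam A" and B: "is_realisation Fam B"
    using assms unfolding riso_def by blast
  show "rle Fam B A" unfolding rle_def using rmap_riso_fun[OF g A] by blast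
  show "rle Fam A B" unfolding rle_def using rmap_riso_fun[OF riso_fun_inv[OF g] B] by blast
qed

lemma rle_refl: "is_realisation Fam R \<Longrightarrow> rle Fam R R"
  using riso_rle riso_refl by blast

lemma maxA_eq:
  assumes "is_realisation Fam R" "t \<in> carrier R" "\<forall>e\<in>carrier R. rord R e t"
  shows "maxA R = lab R t"
proof -
  have "(THE t. t \<in> carrier R \<and> (\<forall>e\<in>carrier R. rord R e t)) = t"
    using assms realisationD(2)[OF assms(1)] by (intro the_equality) blast+
  then show ?thesis unfolding maxA_def by simp
qed

lemma riso_fun_has_top:
  assumes g: "riso_fun R S g" and R: "is_realisation Fam R" and t: "has_top R"
  shows "has_top S" "maxA S = maxA R"
proof -
  obtain t where t: "t \<in> carrier R" "\<forall>e\<in>carrier R. rord R e t"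
    using t unfolding has_top_def by blast
  have gb: "bij_betw g (carrier R) (carrier S)" using riso_funD(1)[OF g] .
  have gt: "g t \<in> carrier S" using gb t bij_betwE by blast
  have top: "\<forall>b\<in>carrier S. rord S b (g t)"
    using gb riso_funD(2)[OF g] t by (metis bij_betw_def imageE)
  then show "has_top S" unfolding has_top_def using gt by blast
  have "maxA S = lab S (g t)" by (rule maxA_eq[OF realisation_riso_fun[OF g R] gt top])
  also have "\<dots> = lab R t" using riso_funD(3)[OF g] t by auto
  also have "\<dots> = maxA R" using maxA_eq[OF R t] by simp
  finally show "maxA S = maxA R" .
qed

lemma has_top_finite:
  assumes "is_realisation Fam R" "has_top R"
  shows "finite (carrier R)"
proof -
  obtain t where t: "t \<in> carrier R" "\<forall>e\<in>carrier R. rord R e t"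
    using assms(2) unfolding has_top_def by blast
  then have "carrier R = below R t" by auto
  then show ?thesis using realisationD(4)[OF assms(1) t(1)] by simp
qed

lemma rmap_lift_below:
  assumes f: "rmap Fam R R' f" and w: "w \<in> carrier R" "f w = Some x"
    and y: "y \<in> carrier R'" "rord R' y x"
  shows "\<exists>u\<in>below R w. f u = Some y"
proof -
  have R: "is_realisation Fam R" by (rule rmapD(1)[OF f])
  have "x \<in> pimage f (below R w)" using w realisationD(1)[OF R w(1)] by blast
  then have "y \<in> pimage f (below R w)"
    using rmapD(6)[OF f down_closed_below[OF R w(1)]] y unfolding down_closed_def by blast
  then show ?thesis by blast
qed

section \<open>Coherent families\<close>

text \<open>Coherence is the only property of the family of configurations used below.\<close>

definition coherent :: "'a set set \<Rightarrow> bool" where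
  "coherent Fam \<longleftrightarrow> (\<forall>Z. (\<forall>F. finite F \<and> F \<subseteq> Z \<longrightarrow> (\<exists>W\<in>Fam. F \<subseteq> W)) \<and>
      (\<forall>a\<in>Z. \<exists>Y\<in>Fam. a \<in> Y \<and> Y \<subseteq> Z) \<longrightarrow> Z \<in> Fam)"

lemma coherentD:
  assumes "coherent Fam" "\<And>F. finite F \<Longrightarrow> F \<subseteq> Z \<Longrightarrow> \<exists>W\<in>Fam. F \<subseteq> W"
    "\<And>a. a \<in> Z \<Longrightarrow> \<exists>Y\<in>Fam. a \<in> Y \<and> Y \<subseteq> Z"
  shows "Z \<in> Fam"
  using assms unfolding coherent_def by blast

lemma coherent_subset_memberI:
  assumes "coherent Fam" "W \<in> Fam" "Z \<subseteq> W" "\<And>a. a \<in> Z \<Longrightarrow> \<exists>Y\<in>Fam. a \<in> Y \<and> Y \<subseteq> Z"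
  shows "Z \<in> Fam"
  using assms by (intro coherentD) blast+

lemma coherent_configs: "coherent (configs E Con ent)"
  unfolding coherent_def
proof (intro allI impI)
  fix Z assume "(\<forall>F. finite F \<and> F \<subseteq> Z \<longrightarrow> (\<exists>W\<in>configs E Con ent. F \<subseteq> W)) \<and>
      (\<forall>a\<in>Z. \<exists>Y\<in>configs E Con ent. a \<in> Y \<and> Y \<subseteq> Z)"
  then have fin: "\<And>F. finite F \<Longrightarrow> F \<subseteq> Z \<Longrightarrow> \<exists>W\<in>configs E Con ent. F \<subseteq> W"
    and loc: "\<And>a. a \<in> Z \<Longrightarrow> \<exists>Y\<in>configs E Con ent. a \<in> Y \<and> Y \<subseteq> Z"
    by auto
  show "Z \<in> configs E Con ent"
    unfolding configs_def mem_Collect_eq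
  proof (intro conjI allI impI ballI)
    fix F assume F: "finite F \<and> F \<subseteq> Z"
    then obtain W where "W \<in> configs E Con ent" "F \<subseteq> W" using fin by blast
    then show "F \<in> Con" using F unfolding configs_def by blast
  next
    fix a assume "a \<in> Z"
    then obtain Y where Y: "Y \<in> configs E Con ent" "a \<in> Y" "Y \<subseteq> Z" using loc by blast
    then obtain es where "es \<noteq> [] \<and> last es = a \<and> set es \<subseteq> Y \<and>
        (\<forall>i<length es. ent (set (take i es)) (es ! i))"
      unfolding configs_def by blast
    then show "\<exists>es. es \<noteq> [] \<and> last es = a \<and> set es \<subseteq> Z \<and>
        (\<forall>i<length es. ent (set (take i es)) (es ! i))" using Y(3) by blast
  qed
qed

section \<open>Restriction below an event\<close>

definition restr :: "('e, 'a) real \<Rightarrow> 'e \<Rightarrow> ('e, 'a) real" where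
  "restr R e = R\<lparr>carrier := below R e\<rparr>"

lemma restr_simps [simp]:
  "carrier (restr R e) = below R e" "rord (restr R e) = rord R" "lab (restr R e) = lab R"
  by (simp_all add: restr_def)

lemma down_closed_restrD:
  assumes R: "is_realisation Fam R" and e: "e \<in> carrier R" and z: "down_closed (restr R e) z"
  shows "down_closed R z"
proof -
  have zc: "z \<subseteq> below R e"
    and zd: "\<And>v u. v \<in> z \<Longrightarrow> u \<in> carrier R \<Longrightarrow> rord R u e \<Longrightarrow> rord R u v \<Longrightarrow> u \<in> z"
    using z unfolding down_closed_def by auto
  have "u \<in> z" if "v \<in> z" "u \<in> carrier R" "rord R u v" for u v
    using zc zd[OF that(1,2) _ that(3)] realisationD(3)[OF R that(2) _ e that(3)] that(1) by blast
  then show ?thesis unfolding down_closed_def using zc by blast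
qed

lemma down_closed_restrI:
  assumes "down_closed R z"
  shows "down_closed (restr R e) (z \<inter> {u. rord R u e})"
  using assms unfolding down_closed_def by auto

lemma restr_realisation:
  assumes R: "is_realisation Fam R" and e: "e \<in> carrier R"
  shows "is_realisation Fam (restr R e)"
proof (rule is_realisationI)
  fix u assume "u \<in> carrier (restr R e)"
  then have "below (restr R e) u \<subseteq> below R u" "u \<in> carrier R" by auto
  then show "finite (below (restr R e) u)" using realisationD(4)[OF R] finite_subset by blast
next
  fix x assume "down_closed (restr R e) x"
  then show "lab (restr R e) ` x \<in> Fam"
    using realisationD(6)[OF R] down_closed_restrD[OF R e] by simp
next
  fix u v assume "u \<in> carrier (restr R e)" "v \<in> carrier (restr R e)"
    "rord (restr R e) u v" "rord (restr R e) v u"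
  then show "u = v" using realisationD(2)[OF R, of u v] by simp
next
  fix u v w assume "u \<in> carrier (restr R e)" "v \<in> carrier (restr R e)" "w \<in> carrier (restr R e)"
    "rord (restr R e) u v" "rord (restr R e) v w"
  then show "rord (restr R e) u w" using realisationD(3)[OF R, of u v w] by simp
qed (use realisationD(1,5)[OF R] in simp_all)

lemma restr_has_top:
  assumes R: "is_realisation Fam R" and e: "e \<in> carrier R"
  shows "has_top (restr R e)" "maxA (restr R e) = lab R e"
proof -
  have top: "e \<in> carrier (restr R e)" "\<forall>u\<in>carrier (restr R e). rord (restr R e) u e"
    using realisationD(1)[OF R e] e by simp_all
  then show "has_top (restr R e)" unfolding has_top_def by blast
  show "maxA (restr R e) = lab R e"
    using maxA_eq[OF restr_realisation[OF R e] top] by simp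
qed

lemma restr_restr:
  assumes R: "is_realisation Fam R" and "e1 \<in> carrier R" "e2 \<in> carrier R" "rord R e1 e2"
  shows "restr (restr R e2) e1 = restr R e1"
proof -
  have "{u \<in> below R e2. rord R u e1} = below R e1"
    using realisationD(3)[OF R _ assms(2,3) _ assms(4)] by auto
  then show ?thesis unfolding restr_def by simp
qed

lemma restr_of_top:
  assumes "t \<in> carrier R" "\<forall>u\<in>carrier R. rord R u t"
  shows "restr R t = R"
proof -
  have "below R t = carrier R" using assms by auto
  then show ?thesis unfolding restr_def by simp
qed

lemma rle_restr:
  assumes R: "is_realisation Fam R" and e: "e \<in> carrier R"
  shows "rle Fam (restr R e) R"
proof -
  define f where "f u = (if u \<in> below R e then Some u else None)" for u
  have "rmap Fam R (restr R e) f" unfolding rmap_def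
  proof (intro conjI allI impI ballI)
    fix x assume dx: "down_closed R x"
    have "pimage f x = x \<inter> {u. rord R u e}"
      using dx unfolding f_def down_closed_def by (auto split: if_splits)
    then show "down_closed (restr R e) (pimage f x)" using down_closed_restrI[OF dx] by simp
  qed (use R restr_realisation[OF R e] in \<open>auto simp: f_def split: if_splits\<close>)
  then show ?thesis unfolding rle_def by blast
qed

section \<open>Extremal realisations\<close>

lemma extremal_realisation: "extremal Fam R \<Longrightarrow> is_realisation Fam R"
  unfolding extremal_def by blast

lemma extremal_iso_map:
  fixes R :: "('e, 'a) real" and S :: "('f, 'a) real"
  assumes ex: "extremal Fam R" and f: "rmap Fam R S f" and tot: "total_map R f"
  shows "iso_map R S f"
proof -
  note F = rmapD[OF f]
  txt \<open>Copy S into the carrier type of R along a section s of f.\<close>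
  define s where "s y = (SOME e. e \<in> carrier R \<and> f e = Some y)" for y
  have s: "s y \<in> carrier R \<and> f (s y) = Some y" if "y \<in> carrier S" for y
    unfolding s_def using F(5)[OF that] by (rule someI2_bex) auto
  have sinj: "inj_on s (carrier S)" by (rule inj_onI) (metis s option.inject)
  have fs: "the (f (s y)) = y" if "y \<in> carrier S" for y using s[OF that] by simp
  define S' :: "('e, 'a) real" where
    "S' = \<lparr>carrier = s ` carrier S, rord = \<lambda>a b. rord S (the (f a)) (the (f b)),
           lab = \<lambda>a. lab S (the (f a))\<rparr>"
  have iso: "riso_fun S S' s" unfolding riso_fun_def S'_def
    using sinj fs by (auto simp: bij_betw_def)
  define f' where "f' e = map_option s (f e)" for e
  have "rmap Fam R S' f'" unfolding rmap_def
  proof (intro conjI allI impI ballI)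
    show "is_realisation Fam R" by (rule F(1))
    show "is_realisation Fam S'" by (rule realisation_riso_fun[OF iso F(2)])
  next
    fix x assume "down_closed R x"
    moreover have "pimage f' x = s ` pimage f x" unfolding f'_def by auto
    ultimately show "down_closed S' (pimage f' x)" using F(6) down_closed_riso_fun_image[OF iso] by simp
  next
    fix e' assume "e' \<in> carrier S'"
    then obtain y where "y \<in> carrier S" "e' = s y" unfolding S'_def by auto
    then show "\<exists>e\<in>carrier R. f' e = Some e'" using s f'_def by auto
  next
    fix e e' assume "f' e = Some e'"
    then show "lab R e = lab S' e'" using F(4,7) fs unfolding f'_def S'_def by auto
  next
    fix e assume "f' e \<noteq> None" then show "e \<in> carrier R" using F(3) f'_def by auto
  next
    fix e e' assume "f' e = Some e'" then show "e' \<in> carrier S'" using F(4) f'_def S'_def by auto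
  qed
  moreover have "total_map R f'" using tot unfolding total_map_def f'_def by auto
  ultimately obtain g where g: "\<forall>e\<in>carrier R. f' e = Some (g e)" "riso_fun R S' g"
    using ex unfolding extremal_def iso_map_def by blast
  have "f e = Some ((inv_into (carrier S) s \<circ> g) e)" if e: "e \<in> carrier R" for e
  proof -
    obtain y where y: "f e = Some y" using tot e unfolding total_map_def by blast
    then have "g e = s y" using g(1) e f'_def by auto
    then show ?thesis using y F(4) sinj by simp
  qed
  then show ?thesis
    unfolding iso_map_def using riso_fun_comp[OF g(2) riso_fun_inv[OF iso]] by blast
qed

lemma extremal_riso_fun:
  fixes S :: "('f, 'a) real"
  assumes ex: "extremal Fam R" and g: "riso_fun R S g"
  shows "extremal Fam S"
  unfolding extremal_def
proof (intro conjI allI impI)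
  have R: "is_realisation Fam R" by (rule extremal_realisation[OF ex])
  show "is_realisation Fam S" by (rule realisation_riso_fun[OF g R])
  fix S' :: "('f, 'a) real" and f assume "rmap Fam S S' f \<and> total_map S f"
  then have f: "rmap Fam S S' f" and tot: "total_map S f" by auto
  have gb: "bij_betw g (carrier R) (carrier S)" using riso_funD(1)[OF g] .
  define F where "F a = Option.bind (if a \<in> carrier R then Some (g a) else None) f" for a
  have F_eq: "F a = f (g a)" if "a \<in> carrier R" for a using that unfolding F_def by simp
  have "rmap Fam R S' F"
    using rmap_comp[OF rmap_riso_fun[OF g R] f] unfolding F_def .
  moreover have "total_map R F"
    using tot bij_betwE[OF gb] F_eq unfolding total_map_def by simp
  ultimately obtain H where H: "\<forall>a\<in>carrier R. F a = Some (H a)" "riso_fun R S' H"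
    using extremal_iso_map[OF ex] unfolding iso_map_def by blast
  have "f b = Some ((H \<circ> inv_into (carrier R) g) b)" if "b \<in> carrier S" for b
  proof -
    have a: "inv_into (carrier R) g b \<in> carrier R" "g (inv_into (carrier R) g b) = b"
      using gb that by (auto simp: bij_betw_def inv_into_into f_inv_into_f)
    then show ?thesis using H(1) F_eq[OF a(1)] by simp
  qed
  then show "iso_map S S' f"
    unfolding iso_map_def using riso_fun_comp[OF riso_fun_inv[OF g] H(2)] by blast
qed

lemma extremal_riso: "riso Fam R S \<Longrightarrow> extremal Fam R \<Longrightarrow> extremal Fam S"
  unfolding riso_def using extremal_riso_fun by blast

definition weaken :: "('e, 'a) real \<Rightarrow> ('e \<Rightarrow> bool) \<Rightarrow> ('e, 'a) real" where
  "weaken R D = R\<lparr>rord := \<lambda>u v. rord R u v \<and> (D v \<longrightarrow> D u)\<rparr>"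

lemma weaken_simps [simp]:
  "carrier (weaken R D) = carrier R" "lab (weaken R D) = lab R"
  "rord (weaken R D) = (\<lambda>u v. rord R u v \<and> (D v \<longrightarrow> D u))"
  by (simp_all add: weaken_def)

lemma weaken_lab_down_closed:
  assumes coh: "coherent Fam" and R: "is_realisation Fam R"
    and D: "\<And>x. down_closed R x \<Longrightarrow> lab R ` {u \<in> x. D u} \<in> Fam"
    and z: "down_closed (weaken R D) z"
  shows "lab (weaken R D) ` z \<in> Fam"
proof -
  note RR = realisationD[OF R]
  from z have zc: "z \<subseteq> carrier R"
    and zd: "\<And>v u. v \<in> z \<Longrightarrow> u \<in> carrier R \<Longrightarrow> rord R u v \<Longrightarrow> (D v \<longrightarrow> D u) \<Longrightarrow> u \<in> z"
    unfolding down_closed_def by auto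
  have "lab R ` down_closure R z \<in> Fam"
    by (rule RR(6)[OF down_closed_down_closure[OF R zc]])
  moreover have "lab R ` z \<subseteq> lab R ` down_closure R z"
    using subset_down_closure[OF R zc] by (rule image_mono)
  moreover have "\<exists>Y\<in>Fam. a \<in> Y \<and> Y \<subseteq> lab R ` z" if a: "a \<in> lab R ` z" for a
  proof -
    obtain w where w: "w \<in> z" "a = lab R w" using a by blast
    have wc: "w \<in> carrier R" using w zc by blast
    show ?thesis
    proof (cases "D w")
      case False
      then have "lab R ` below R w \<subseteq> lab R ` z" using zd[OF w(1)] by auto
      moreover have "a \<in> lab R ` below R w" using RR(1)[OF wc] wc w(2) by blast
      ultimately show ?thesis by (intro bexI[OF _ RR(6)[OF down_closed_below[OF R wc]]] conjI)
    next
      case True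
      define y where "y = down_closure R {v \<in> z. D v}"
      have zD: "{v \<in> z. D v} \<subseteq> carrier R" using zc by blast
      then have "lab R ` {u \<in> y. D u} \<in> Fam"
        unfolding y_def by (rule D[OF down_closed_down_closure[OF R]])
      moreover have "{u \<in> y. D u} = {u \<in> z. D u}"
      proof
        show "{u \<in> y. D u} \<subseteq> {u \<in> z. D u}"
          using zd unfolding y_def down_closure_def by blast
        show "{u \<in> z. D u} \<subseteq> {u \<in> y. D u}"
          using subset_down_closure[OF R zD] unfolding y_def by blast
      qed
      moreover have "a \<in> lab R ` {u \<in> z. D u}" using True w by simp
      ultimately show ?thesis by (intro bexI[of _ "lab R ` {u \<in> z. D u}"] conjI) auto
    qed
  qed
  ultimately show ?thesis unfolding weaken_simps by (rule coherent_subset_memberI[OF coh])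
qed

lemma weaken_realisation:
  assumes coh: "coherent Fam" and R: "is_realisation Fam R"
    and D: "\<And>x. down_closed R x \<Longrightarrow> lab R ` {u \<in> x. D u} \<in> Fam"
  shows "is_realisation Fam (weaken R D)"
proof (rule is_realisationI)
  fix z assume "down_closed (weaken R D) z"
  then show "lab (weaken R D) ` z \<in> Fam" using weaken_lab_down_closed[OF coh R D] by blast
next
  fix e assume e: "e \<in> carrier (weaken R D)"
  have "below (weaken R D) e \<subseteq> below R e" by auto
  then show "finite (below (weaken R D) e)"
    using realisationD(4)[OF R] e finite_subset by auto
next
  fix e1 e2 e3 assume "e1 \<in> carrier (weaken R D)" "e2 \<in> carrier (weaken R D)"
    "e3 \<in> carrier (weaken R D)" "rord (weaken R D) e1 e2" "rord (weaken R D) e2 e3"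
  then show "rord (weaken R D) e1 e3" using realisationD(3)[OF R, of e1 e2 e3] by auto
next
  fix e e' assume "e \<in> carrier (weaken R D)" "e' \<in> carrier (weaken R D)"
    "rord (weaken R D) e e'" "rord (weaken R D) e' e"
  then show "e = e'" using realisationD(2)[OF R, of e e'] by simp
qed (use realisationD(1,5)[OF R] in simp_all)

lemma extremal_rmap_domain_down_closed:
  assumes coh: "coherent Fam" and ex: "extremal Fam R" and g: "rmap Fam R S g"
    and v: "v \<in> carrier R" "g v \<noteq> None" and u: "u \<in> carrier R" "rord R u v"
  shows "g u \<noteq> None"
proof -
  note G = rmapD[OF g]
  define D where "D u \<longleftrightarrow> g u \<noteq> None" for u
  have R: "is_realisation Fam R" by (rule extremal_realisation[OF ex])
  have "lab R ` {u \<in> x. D u} \<in> Fam" if "down_closed R x" for x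
  proof -
    have "lab R ` {u \<in> x. D u} = lab S ` pimage g x"
      using G(7) unfolding D_def by force
    then show ?thesis using realisationD(6)[OF G(2) G(6)[OF that]] by simp
  qed
  then have W: "is_realisation Fam (weaken R D)" by (rule weaken_realisation[OF coh R])
  define f where "f u = (if u \<in> carrier R then Some u else None)" for u
  have "rmap Fam R (weaken R D) f" unfolding rmap_def
  proof (intro conjI allI impI ballI)
    fix x assume "down_closed R x"
    moreover from this have "pimage f x = x" unfolding f_def down_closed_def by auto
    ultimately show "down_closed (weaken R D) (pimage f x)" unfolding down_closed_def by simp
  qed (use R W in \<open>auto simp: f_def split: if_splits\<close>)
  moreover have "total_map R f" unfolding total_map_def f_def by auto
  ultimately obtain h where h: "\<forall>e\<in>carrier R. f e = Some (h e)" "riso_fun R (weaken R D) h"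
    using ex unfolding extremal_def iso_map_def by blast
  txt \<open>The identity into the weakened order is total, so by extremality the two orders agree.\<close>
  then have "h e = e" if "e \<in> carrier R" for e using that f_def by auto
  then have "rord (weaken R D) u v" using riso_funD(2)[OF h(2)] u v by metis
  then show ?thesis using v D_def by simp
qed

definition restr_map ::
  "('e, 'a) real \<Rightarrow> 'e \<Rightarrow> ('f, 'a) real \<Rightarrow> 'f \<Rightarrow> ('e \<Rightarrow> 'f option) \<Rightarrow> 'e \<Rightarrow> 'f option" where
  "restr_map R e R' e' f u =
     (case f u of None \<Rightarrow> None | Some y \<Rightarrow> if rord R u e \<and> rord R' y e' then Some y else None)"

lemma restr_map_Some_iff:
  "restr_map R e R' e' f u = Some y \<longleftrightarrow> f u = Some y \<and> rord R u e \<and> rord R' y e'"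
  unfolding restr_map_def by (cases "f u") auto

lemma rmap_restr_map:
  assumes f: "rmap Fam R R' f" and e: "e \<in> carrier R" and fe: "f e = Some e'"
  shows "rmap Fam (restr R e) (restr R' e') (restr_map R e R' e' f)"
proof -
  note F = rmapD[OF f]
  have R: "is_realisation Fam R" by (rule F(1))
  have dom: "u \<in> below R e" if "restr_map R e R' e' f u \<noteq> None" for u
    using that F(3) unfolding restr_map_def by (auto split: option.splits if_splits)
  have surj: "\<exists>u\<in>below R e. restr_map R e R' e' f u = Some y" if y: "y \<in> below R' e'" for y
    using rmap_lift_below[OF f e fe] y by (auto simp: restr_map_Some_iff)
  have dc: "down_closed (restr R' e') (pimage (restr_map R e R' e' f) z)"
    if dz: "down_closed (restr R e) z" for z
  proof -
    have "down_closed (restr R' e') (pimage f z \<inter> {y. rord R' y e'})"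
      by (rule down_closed_restrI[OF F(6)[OF down_closed_restrD[OF R e dz]]])
    moreover have "pimage f z \<inter> {y. rord R' y e'} = pimage (restr_map R e R' e' f) z"
      using dz unfolding down_closed_def by (auto simp: restr_map_Some_iff)
    ultimately show ?thesis by simp
  qed
  show ?thesis
    unfolding rmap_def restr_simps
    using restr_realisation[OF R e] restr_realisation[OF F(2) F(4)[OF fe]] dom surj dc F(4,7)
    by (auto simp: restr_map_Some_iff)
qed

lemma restr_map_iso_map:
  assumes coh: "coherent Fam" and ex: "extremal Fam (restr R e)"
    and f: "rmap Fam R R' f" and e: "e \<in> carrier R" and fe: "f e = Some e'"
  shows "iso_map (restr R e) (restr R' e') (restr_map R e R' e' f)"
proof -
  note fr = rmap_restr_map[OF f e fe]
  have R: "is_realisation Fam R" by (rule rmapD(1)[OF f])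
  have "restr_map R e R' e' f e \<noteq> None"
    using fe realisationD(1)[OF R e] realisationD(1)[OF rmapD(2)[OF f] rmapD(4)[OF f fe]]
    by (simp add: restr_map_def)
  moreover have "e \<in> carrier (restr R e)" using e realisationD(1)[OF R e] by simp
  ultimately have "total_map (restr R e) (restr_map R e R' e' f)"
    unfolding total_map_def using extremal_rmap_domain_down_closed[OF coh ex fr] by simp
  then show ?thesis by (rule extremal_iso_map[OF ex fr])
qed

lemma Inl_in_Plus_iff [simp]: "Inl x \<in> A <+> B \<longleftrightarrow> x \<in> A"
  and Inr_in_Plus_iff [simp]: "Inr y \<in> A <+> B \<longleftrightarrow> y \<in> B"
  by auto

text \<open>Gluing: the realisation R' is put in place of the part of R below e, with the events of R
  outside that part sitting above the images under f of their predecessors below e.\<close>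

definition glue_ord :: "('e, 'a) real \<Rightarrow> 'e \<Rightarrow> ('f, 'a) real \<Rightarrow> ('e \<Rightarrow> 'f option) \<Rightarrow>
    'f + 'e \<Rightarrow> 'f + 'e \<Rightarrow> bool" where
  "glue_ord R e R' f a b = (case (a, b) of
      (Inl x, Inl y) \<Rightarrow> rord R' x y
    | (Inl x, Inr v) \<Rightarrow> (\<exists>w\<in>below R e. rord R w v \<and> f w = Some x)
    | (Inr u, Inl y) \<Rightarrow> False
    | (Inr u, Inr v) \<Rightarrow> rord R u v)"

definition glue :: "('e, 'a) real \<Rightarrow> 'e \<Rightarrow> ('f, 'a) real \<Rightarrow> ('e \<Rightarrow> 'f option) \<Rightarrow> ('f + 'e, 'a) real"
  where
  "glue R e R' f = \<lparr>carrier = carrier R' <+> {u \<in> carrier R. \<not> rord R u e},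
     rord = glue_ord R e R' f, lab = case_sum (lab R') (lab R)\<rparr>"

definition glue_map :: "('e, 'a) real \<Rightarrow> 'e \<Rightarrow> ('e \<Rightarrow> 'f option) \<Rightarrow> 'e \<Rightarrow> ('f + 'e) option" where
  "glue_map R e f u =
     (if u \<in> carrier R then if rord R u e then map_option Inl (f u) else Some (Inr u) else None)"

lemma glue_simps [simp]:
  "carrier (glue R e R' f) = carrier R' <+> {u \<in> carrier R. \<not> rord R u e}"
  "rord (glue R e R' f) (Inl x) (Inl y) \<longleftrightarrow> rord R' x y"
  "rord (glue R e R' f) (Inl x) (Inr v) \<longleftrightarrow> (\<exists>w\<in>below R e. rord R w v \<and> f w = Some x)"
  "\<not> rord (glue R e R' f) (Inr u) (Inl y)"
  "rord (glue R e R' f) (Inr u) (Inr v) \<longleftrightarrow> rord R u v"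
  "lab (glue R e R' f) (Inl x) = lab R' x"
  "lab (glue R e R' f) (Inr u) = lab R u"
  by (auto simp: glue_def glue_ord_def)

lemma lab_glue_image:
  "lab (glue R e R' f) ` z = lab R' ` {x. Inl x \<in> z} \<union> lab R ` {u. Inr u \<in> z}"
proof
  show "lab (glue R e R' f) ` z \<subseteq> lab R' ` {x. Inl x \<in> z} \<union> lab R ` {u. Inr u \<in> z}"
  proof
    fix a assume "a \<in> lab (glue R e R' f) ` z"
    then obtain b where "b \<in> z" "a = lab (glue R e R' f) b" by blast
    then show "a \<in> lab R' ` {x. Inl x \<in> z} \<union> lab R ` {u. Inr u \<in> z}" by (cases b) auto
  qed
qed (auto intro: rev_image_eqI)

context
  fixes Fam R e R' f
  assumes R: "is_realisation Fam R" and e: "e \<in> carrier R"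
    and f: "rmap Fam (restr R e) R' f" and tot: "total_map (restr R e) f"
begin

private lemma f_Some: "u \<in> below R e \<Longrightarrow> \<exists>y. f u = Some y \<and> y \<in> carrier R'"
  using tot rmapD(4)[OF f] unfolding total_map_def by fastforce

private lemma f_lab: "f u = Some y \<Longrightarrow> lab R u = lab R' y"
  using rmapD(7)[OF f] by fastforce

private lemma R'_realisation: "is_realisation Fam R'"
  by (rule rmapD(2)[OF f])

private lemma glue_trans:
  assumes "a \<in> carrier (glue R e R' f)" "b \<in> carrier (glue R e R' f)" "c \<in> carrier (glue R e R' f)"
    "rord (glue R e R' f) a b" "rord (glue R e R' f) b c"
  shows "rord (glue R e R' f) a c"
proof -
  note trans = realisationD(3)[OF R] and trans' = realisationD(3)[OF R'_realisation]
  consider (LLL) x y z where "a = Inl x" "b = Inl y" "c = Inl z"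
    | (LLR) x y v where "a = Inl x" "b = Inl y" "c = Inr v"
    | (LRR) x u v where "a = Inl x" "b = Inr u" "c = Inr v"
    | (RRR) t u v where "a = Inr t" "b = Inr u" "c = Inr v"
    using assms(4,5) by (cases a; cases b; cases c) auto
  then show ?thesis
  proof cases
    case (LLL x y z)
    then show ?thesis using assms trans'[of x y z] by simp
  next
    case (LLR x y v)
    then obtain w where w: "w \<in> below R e" "rord R w v" "f w = Some y" using assms by auto
    have "x \<in> carrier R'" "rord R' x y" using assms LLR by auto
    then obtain w' where w': "w' \<in> below R w" "f w' = Some x"
      using rmap_lift_below[OF f _ w(3)] w(1) by auto
    have "v \<in> carrier R" using assms LLR by simp
    then have "rord R w' e" "rord R w' v"
      using trans[of w' w e] trans[of w' w v] w w' e by auto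
    then show ?thesis using LLR w' by auto
  next
    case (LRR x u v)
    then obtain w where w: "w \<in> below R e" "rord R w u" "f w = Some x" using assms by auto
    have "rord R w v" using trans[of w u v] w assms LRR by simp
    then show ?thesis using LRR w by auto
  next
    case (RRR t u v)
    then show ?thesis using assms trans[of t u v] by simp
  qed
qed

private lemma glue_finite_below:
  assumes a: "a \<in> carrier (glue R e R' f)"
  shows "finite (below (glue R e R' f) a)"
proof (cases a)
  case (Inl y)
  then have "below (glue R e R' f) a \<subseteq> Inl ` below R' y" by auto
  moreover have "finite (below R' y)" using realisationD(4)[OF R'_realisation] a Inl by simp
  ultimately show ?thesis by (rule finite_subset[OF _ finite_imageI])
next
  case (Inr v)
  then have "below (glue R e R' f) a \<subseteq> Inl ` ((\<lambda>w. the (f w)) ` below R v) \<union> Inr ` below R v"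
    by force
  moreover have "finite (below R v)" using realisationD(4)[OF R] a Inr by simp
  ultimately show ?thesis by (meson finite_Un finite_imageI finite_subset)
qed

private lemma lab_below_subset_glue:
  assumes z: "down_closed (glue R e R' f) z" and v: "Inr v \<in> z"
  shows "lab R ` below R v \<subseteq> lab (glue R e R' f) ` z"
proof
  let ?G = "glue R e R' f"
  have zd: "\<And>b. b \<in> carrier ?G \<Longrightarrow> rord ?G b (Inr v) \<Longrightarrow> b \<in> z"
    using z v unfolding down_closed_def by auto
  fix b assume "b \<in> lab R ` below R v"
  then obtain u where u: "u \<in> carrier R" "rord R u v" "b = lab R u" by auto
  show "b \<in> lab ?G ` z"
  proof (cases "rord R u e")
    case True
    obtain y where y: "f u = Some y" "y \<in> carrier R'" using f_Some u(1) True by blast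
    have "rord ?G (Inl y) (Inr v)" using u True y by auto
    then have "Inl y \<in> z" using zd y by simp
    moreover have "b = lab ?G (Inl y)" using u y f_lab by auto
    ultimately show ?thesis by blast
  next
    case False
    then have "Inr u \<in> z" using zd u by simp
    moreover have "b = lab ?G (Inr u)" using u by auto
    ultimately show ?thesis by blast
  qed
qed

private lemma glue_lab_down_closed:
  assumes coh: "coherent Fam" and z: "down_closed (glue R e R' f) z"
  shows "lab (glue R e R' f) ` z \<in> Fam"
proof -
  note RR = realisationD[OF R]
  let ?G = "glue R e R' f"
  define z1 where "z1 = {x. Inl x \<in> z}"
  define z2 where "z2 = {u. Inr u \<in> z}"
  have z2c: "z2 \<subseteq> carrier R" using z unfolding down_closed_def z2_def by auto
  have labz: "lab ?G ` z = lab R' ` z1 \<union> lab R ` z2"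
    unfolding z1_def z2_def by (rule lab_glue_image)
  have z1: "down_closed R' z1"
    using z unfolding down_closed_def z1_def by auto
  have Y1: "lab R' ` z1 \<in> Fam" by (rule realisationD(6)[OF R'_realisation z1])
  define zz where "zz = below R e \<union> down_closure R z2"
  have "down_closed R zz"
    using down_closed_below[OF R e] down_closed_down_closure[OF R z2c]
    unfolding zz_def down_closed_def by blast
  then have W: "lab R ` zz \<in> Fam" by (rule RR(6))
  have "lab R' ` z1 \<subseteq> lab R ` zz"
  proof
    fix a assume "a \<in> lab R' ` z1"
    then obtain x where x: "x \<in> z1" "a = lab R' x" by blast
    then have "x \<in> carrier R'" using z1 unfolding down_closed_def by auto
    then obtain w where w: "w \<in> below R e" "f w = Some x" using rmapD(5)[OF f] by auto
    then show "a \<in> lab R ` zz" using x f_lab[OF w(2)] by (auto simp: zz_def intro: rev_image_eqI)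
  qed
  moreover have "lab R ` z2 \<subseteq> lab R ` zz"
    using subset_down_closure[OF R z2c] unfolding zz_def by blast
  ultimately have sub: "lab ?G ` z \<subseteq> lab R ` zz" unfolding labz by blast
  have "\<exists>Y\<in>Fam. a \<in> Y \<and> Y \<subseteq> lab ?G ` z" if a: "a \<in> lab ?G ` z" for a
  proof -
    consider x where "x \<in> z1" "a = lab R' x" | v where "v \<in> z2" "a = lab R v"
      using a labz by blast
    then show ?thesis
    proof cases
      case 1
      then have "a \<in> lab R' ` z1" "lab R' ` z1 \<subseteq> lab ?G ` z" using labz by auto
      then show ?thesis by (intro bexI[OF _ Y1] conjI)
    next
      case 2
      have vc: "v \<in> carrier R" using 2 z2c by auto
      have "lab R ` below R v \<subseteq> lab ?G ` z"
        using lab_below_subset_glue[OF z] 2 unfolding z2_def by simp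
      moreover have "a \<in> lab R ` below R v" using 2 vc RR(1) by auto
      ultimately show ?thesis by (intro bexI[OF _ RR(6)[OF down_closed_below[OF R vc]]] conjI)
    qed
  qed
  then show ?thesis by (rule coherent_subset_memberI[OF coh W sub])
qed

lemma glue_realisation:
  assumes coh: "coherent Fam"
  shows "is_realisation Fam (glue R e R' f)"
proof (rule is_realisationI)
  fix a assume "a \<in> carrier (glue R e R' f)"
  then show "rord (glue R e R' f) a a" "lab (glue R e R' f) a \<in> \<Union>Fam"
    using realisationD(1,5)[OF R] realisationD(1,5)[OF R'_realisation] by auto
next
  fix a b assume "a \<in> carrier (glue R e R' f)" "b \<in> carrier (glue R e R' f)"
    "rord (glue R e R' f) a b" "rord (glue R e R' f) b a"
  then show "a = b"
    by (cases a; cases b) (auto intro: realisationD(2)[OF R] realisationD(2)[OF R'_realisation])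
qed (use glue_trans glue_finite_below glue_lab_down_closed[OF coh] in blast)+

lemma glue_map_Some_iff:
  "glue_map R e f u = Some b \<longleftrightarrow> u \<in> carrier R \<and>
     (if rord R u e then (\<exists>y. f u = Some y \<and> b = Inl y) else b = Inr u)"
  unfolding glue_map_def by auto

private lemma down_closed_glue_image:
  assumes x: "down_closed R x"
  shows "down_closed (glue R e R' f) (pimage (glue_map R e f) x)"
  unfolding down_closed_def
proof (intro conjI ballI impI)
  let ?G = "glue R e R' f" and ?I = "pimage (glue_map R e f) x"
  have xc: "x \<subseteq> carrier R" and xd: "\<And>v u. v \<in> x \<Longrightarrow> u \<in> carrier R \<Longrightarrow> rord R u v \<Longrightarrow> u \<in> x"
    using x unfolding down_closed_def by auto
  show "?I \<subseteq> carrier ?G"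
    using rmapD(4)[OF f] by (auto simp: glue_map_Some_iff split: if_splits)
  fix b b' assume b: "b \<in> ?I" and b': "b' \<in> carrier ?G" "rord ?G b' b"
  then obtain u where u: "u \<in> x" "glue_map R e f u = Some b" by blast
  have uc: "u \<in> carrier R" using u xc by auto
  show "b' \<in> ?I"
  proof (cases "rord R u e")
    case True
    then obtain y where y: "f u = Some y" "b = Inl y" using u by (auto simp: glue_map_Some_iff)
    then obtain y' where y': "b' = Inl y'" "y' \<in> carrier R'" "rord R' y' y"
      using b' by (cases b') auto
    have "y \<in> pimage f (x \<inter> {u. rord R u e})" using u True y by auto
    then have "y' \<in> pimage f (x \<inter> {u. rord R u e})"
      using rmapD(6)[OF f down_closed_restrI[OF x]] y' unfolding down_closed_def by blast
    then obtain w where "w \<in> x" "rord R w e" "f w = Some y'" by auto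
    then show ?thesis using xc y' by (auto simp: glue_map_Some_iff)
  next
    case False
    then have bu: "b = Inr u" using u by (auto simp: glue_map_Some_iff)
    show ?thesis
    proof (cases b')
      case (Inl y')
      then obtain w where w: "w \<in> below R e" "rord R w u" "f w = Some y'" using b' bu by auto
      then have "w \<in> x" using xd[OF u(1)] by blast
      then show ?thesis using w Inl by (auto simp: glue_map_Some_iff)
    next
      case (Inr u')
      then have "u' \<in> carrier R" "\<not> rord R u' e" "rord R u' u" using b' bu by auto
      moreover from this have "u' \<in> x" using xd[OF u(1)] by blast
      ultimately show ?thesis using Inr by (auto simp: glue_map_Some_iff)
    qed
  qed
qed

lemma rmap_glue_map:
  assumes coh: "coherent Fam"
  shows "rmap Fam R (glue R e R' f) (glue_map R e f)"
  unfolding rmap_def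
proof (intro conjI allI impI ballI)
  fix b assume "b \<in> carrier (glue R e R' f)"
  then consider y where "b = Inl y" "y \<in> carrier R'" | u where "b = Inr u" "u \<in> carrier R" "\<not> rord R u e"
    by auto
  then show "\<exists>u\<in>carrier R. glue_map R e f u = Some b"
  proof cases
    case 1
    then obtain w where "w \<in> below R e" "f w = Some y" using rmapD(5)[OF f] by auto
    then show ?thesis using 1 by (auto simp: glue_map_Some_iff)
  next
    case 2 then show ?thesis by (auto simp: glue_map_Some_iff)
  qed
next
  fix u b assume "glue_map R e f u = Some b"
  then show "lab R u = lab (glue R e R' f) b"
    using f_lab by (auto simp: glue_map_Some_iff split: if_splits)
qed (use R glue_realisation[OF coh] down_closed_glue_image rmapD(4)[OF f]
     in \<open>auto simp: glue_map_Some_iff glue_map_def split: if_splits\<close>)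

end

lemma restr_extremal:
  fixes R :: "('e, 'a) real"
  assumes coh: "coherent Fam" and ex: "extremal Fam R" and e: "e \<in> carrier R"
  shows "extremal Fam (restr R e)"
  unfolding extremal_def
proof (intro conjI allI impI)
  have R: "is_realisation Fam R" by (rule extremal_realisation[OF ex])
  show "is_realisation Fam (restr R e)" by (rule restr_realisation[OF R e])
  fix R' :: "('e, 'a) real" and f
  assume "rmap Fam (restr R e) R' f \<and> total_map (restr R e) f"
  then have f: "rmap Fam (restr R e) R' f" and tot: "total_map (restr R e) f" by auto
  have "total_map R (glue_map R e f)"
    using tot unfolding total_map_def glue_map_def by auto
  then obtain H where H: "\<forall>u\<in>carrier R. glue_map R e f u = Some (H u)" "riso_fun R (glue R e R' f) H"
    using extremal_iso_map[OF ex rmap_glue_map[OF R e f tot coh]] unfolding iso_map_def by blast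
  define g where "g u = projl (H u)" for u
  have gH: "f u = Some (g u) \<and> H u = Inl (g u)" if u: "u \<in> below R e" for u
  proof -
    obtain y where y: "f u = Some y" using tot u unfolding total_map_def by auto
    then have "H u = Inl y" using H(1) u unfolding glue_map_def by auto
    then show ?thesis using y g_def by simp
  qed
  have Hinj: "inj_on H (carrier R)" using riso_funD(1)[OF H(2)] bij_betw_def by blast
  have "riso_fun (restr R e) R' g" unfolding riso_fun_def restr_simps
  proof (intro conjI ballI)
    have "inj_on g (below R e)"
      using gH Hinj unfolding inj_on_def by (metis (no_types, lifting) mem_Collect_eq)
    moreover have "g ` below R e = carrier R'"
    proof
      show "g ` below R e \<subseteq> carrier R'" using gH rmapD(4)[OF f] by blast
      show "carrier R' \<subseteq> g ` below R e"
        using rmapD(5)[OF f] gH by (fastforce simp: image_iff)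
    qed
    ultimately show "bij_betw g (below R e) (carrier R')" unfolding bij_betw_def by blast
  next
    fix u1 u2 assume u: "u1 \<in> below R e" "u2 \<in> below R e"
    have "rord R u1 u2 = rord (glue R e R' f) (H u1) (H u2)" using riso_funD(2)[OF H(2)] u by auto
    also have "\<dots> = rord R' (g u1) (g u2)" using gH[OF u(1)] gH[OF u(2)] by simp
    finally show "rord R u1 u2 = rord R' (g u1) (g u2)" .
  next
    fix u assume "u \<in> below R e"
    then show "lab R' (g u) = lab R u" using gH rmapD(7)[OF f] by fastforce
  qed
  then show "iso_map (restr R e) R' f" unfolding iso_map_def using gH by auto
qed

lemma rle_iff_riso_restr:
  fixes R :: "('e, 'a) real" and p :: "('f, 'a) real"
  assumes coh: "coherent Fam" and ex: "extremal Fam R" and p: "is_realisation Fam p" "has_top p"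
  shows "rle Fam p R \<longleftrightarrow> (\<exists>e\<in>carrier R. riso Fam (restr R e) p)"
proof
  have R: "is_realisation Fam R" by (rule extremal_realisation[OF ex])
  assume "\<exists>e\<in>carrier R. riso Fam (restr R e) p"
  then obtain e where e: "e \<in> carrier R" "riso Fam (restr R e) p" by blast
  show "rle Fam p R" using rle_trans[OF riso_rle(2)[OF e(2)] rle_restr[OF R e(1)]] .
next
  assume "rle Fam p R"
  then obtain g where g: "rmap Fam R p g" unfolding rle_def by blast
  obtain t where t: "t \<in> carrier p" "\<forall>u\<in>carrier p. rord p u t" using p(2) unfolding has_top_def by blast
  obtain w where w: "w \<in> carrier R" "g w = Some t" using rmapD(5)[OF g t(1)] by blast
  have "iso_map (restr R w) (restr p t) (restr_map R w p t g)"
    by (rule restr_map_iso_map[OF coh restr_extremal[OF coh ex w(1)] g w])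
  then have "riso Fam (restr R w) p"
    unfolding iso_map_def restr_of_top[OF t]
    using restr_realisation[OF extremal_realisation[OF ex] w(1)] riso_funI by blast
  then show "\<exists>e\<in>carrier R. riso Fam (restr R e) p" using w(1) by blast
qed

text \<open>Identifying e2 with e1 (keeping e1 below everything e2 was below) is a total map; this is
  where extremality forbids two distinct events with the same label and strict predecessors.\<close>

definition merge :: "('e, 'a) real \<Rightarrow> 'e \<Rightarrow> 'e \<Rightarrow> ('e, 'a) real" where
  "merge R e1 e2 = R\<lparr>carrier := carrier R - {e2}, rord := \<lambda>u v. rord R u v \<or> (u = e1 \<and> rord R e2 v)\<rparr>"

lemma merge_simps [simp]:
  "carrier (merge R e1 e2) = carrier R - {e2}" "lab (merge R e1 e2) = lab R"
  "rord (merge R e1 e2) u v \<longleftrightarrow> rord R u v \<or> (u = e1 \<and> rord R e2 v)"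
  by (simp_all add: merge_def)

context
  fixes Fam R e1 e2
  assumes R: "is_realisation Fam R" and e: "e1 \<in> carrier R" "e2 \<in> carrier R" "e1 \<noteq> e2"
    and same_below: "below R e1 - {e1} = below R e2 - {e2}"
begin

private lemma strict_below: "u \<in> carrier R \<Longrightarrow> u \<noteq> e1 \<and> rord R u e1 \<longleftrightarrow> u \<noteq> e2 \<and> rord R u e2"
  using same_below by blast

private lemma incomparable: "\<not> rord R e1 e2" "\<not> rord R e2 e1"
  using strict_below[OF e(1)] strict_below[OF e(2)] e(3) by auto

private lemma merge_lab_down_closed:
  assumes lab: "lab R e1 = lab R e2" and z: "down_closed (merge R e1 e2) z"
  shows "lab (merge R e1 e2) ` z \<in> Fam"
proof -
  note RR = realisationD[OF R]
  from z have zc: "z \<subseteq> carrier R - {e2}" and zd: "\<And>v u. v \<in> z \<Longrightarrow> u \<in> carrier R - {e2} \<Longrightarrow>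
      rord R u v \<or> (u = e1 \<and> rord R e2 v) \<Longrightarrow> u \<in> z"
    unfolding down_closed_def by auto
  define z' where "z' = z \<union> (if e1 \<in> z then {e2} else {})"
  have "down_closed R z'" unfolding down_closed_def
  proof (intro conjI ballI impI)
    show "z' \<subseteq> carrier R" using zc e unfolding z'_def by auto
  next
    fix v u assume v: "v \<in> z'" and u: "u \<in> carrier R" "rord R u v"
    show "u \<in> z'"
    proof (cases "v \<in> z")
      case True
      show ?thesis
      proof (cases "u = e2")
        case True2: True
        then have "e1 \<in> z" using zd[OF \<open>v \<in> z\<close>, of e1] e u(2) by auto
        then show ?thesis using True2 unfolding z'_def by simp
      qed (use zd[OF True, of u] u in \<open>auto simp: z'_def\<close>)
    next
      case False
      then have ve: "v = e2" "e1 \<in> z" using v unfolding z'_def by (auto split: if_splits)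
      then show ?thesis using zd[OF ve(2), of u] u strict_below[OF u(1)] unfolding z'_def by auto
    qed
  qed
  moreover have "lab R ` z' = lab R ` z" using lab unfolding z'_def by (auto intro: rev_image_eqI)
  ultimately show ?thesis using RR(6) by fastforce
qed

lemma merge_realisation:
  assumes lab: "lab R e1 = lab R e2"
  shows "is_realisation Fam (merge R e1 e2)"
proof (rule is_realisationI)
  note RR = realisationD[OF R]
  fix u v assume uv: "u \<in> carrier (merge R e1 e2)" "v \<in> carrier (merge R e1 e2)"
    "rord (merge R e1 e2) u v" "rord (merge R e1 e2) v u"
  then have uc: "u \<in> carrier R" "v \<in> carrier R" by auto
  show "u = v"
  proof (cases "rord R u v \<and> rord R v u")
    case True then show ?thesis using RR(2)[OF uc] by blast
  next
    case False
    then have "rord R e2 e1" using uv RR(3)[OF e(2) uc(1) e(1)] RR(3)[OF e(2) uc(2) e(1)] by auto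
    then show ?thesis using incomparable by blast
  qed
next
  note RR = realisationD[OF R]
  fix u v w assume c: "u \<in> carrier (merge R e1 e2)" "v \<in> carrier (merge R e1 e2)"
    "w \<in> carrier (merge R e1 e2)" and uv: "rord (merge R e1 e2) u v" and vw: "rord (merge R e1 e2) v w"
  then have c': "u \<in> carrier R" "v \<in> carrier R" "w \<in> carrier R" "u \<noteq> e2" by auto
  have "rord R u w \<or> (u = e1 \<and> rord R e2 w)"
  proof (cases "rord R v w")
    case True
    then show ?thesis using uv RR(3)[OF c'(1-3)] RR(3)[OF e(2) c'(2,3)] by auto
  next
    case False
    then have v: "v = e1" "rord R e2 w" using vw by auto
    show ?thesis
    proof (cases "u = e1")
      case False
      then have "rord R u e2" using uv v strict_below[OF c'(1)] c'(4) by auto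
      then show ?thesis using RR(3)[OF c'(1) e(2) c'(3)] v by blast
    qed (use v in blast)
  qed
  then show "rord (merge R e1 e2) u w" by simp
next
  fix v assume v: "v \<in> carrier (merge R e1 e2)"
  have "below (merge R e1 e2) v \<subseteq> insert e1 (below R v)" by auto
  then show "finite (below (merge R e1 e2) v)"
    using realisationD(4)[OF R] v finite_subset by auto
next
  fix z assume "down_closed (merge R e1 e2) z"
  then show "lab (merge R e1 e2) ` z \<in> Fam" by (rule merge_lab_down_closed[OF lab])
qed (use realisationD(1,5)[OF R] in auto)

lemma rmap_merge:
  assumes lab: "lab R e1 = lab R e2"
  shows "rmap Fam R (merge R e1 e2) (\<lambda>u. if u \<in> carrier R then Some (if u = e2 then e1 else u) else None)"
    (is "rmap Fam R ?M ?F")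
  unfolding rmap_def
proof (intro conjI allI impI ballI)
  fix x assume "down_closed R x"
  then have xc: "x \<subseteq> carrier R" and xd: "\<And>v u. v \<in> x \<Longrightarrow> u \<in> carrier R \<Longrightarrow> rord R u v \<Longrightarrow> u \<in> x"
    unfolding down_closed_def by auto
  have img: "pimage ?F x = (x - {e2}) \<union> (if e2 \<in> x then {e1} else {})"
    using xc by (auto split: if_splits)
  show "down_closed ?M (pimage ?F x)" unfolding img down_closed_def
  proof (intro conjI ballI impI)
    show "x - {e2} \<union> (if e2 \<in> x then {e1} else {}) \<subseteq> carrier ?M" using xc e by auto
  next
    fix v u assume v: "v \<in> x - {e2} \<union> (if e2 \<in> x then {e1} else {})" and u: "u \<in> carrier ?M"
      and uv: "rord ?M u v"
    show "u \<in> x - {e2} \<union> (if e2 \<in> x then {e1} else {})"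
    proof (cases "v \<in> x - {e2}")
      case True
      then show ?thesis using xd[of v u] xd[of v e2] u uv e by auto
    next
      case False
      then have ve: "v = e1" "e2 \<in> x" using v by (auto split: if_splits)
      show ?thesis
      proof (cases "u = e1")
        case False
        then have "rord R u e2" using uv ve incomparable strict_below[of u] u by auto
        then show ?thesis using xd[of e2 u] ve u by auto
      qed (use ve in auto)
    qed
  qed
qed (use R merge_realisation[OF lab] e lab in \<open>auto split: if_splits\<close>)

end

lemma extremal_twins_eq:
  assumes ex: "extremal Fam R" and e: "e1 \<in> carrier R" "e2 \<in> carrier R"
    and same_below: "below R e1 - {e1} = below R e2 - {e2}" and lab: "lab R e1 = lab R e2"
  shows "e1 = e2"
proof (rule ccontr)
  assume ne: "e1 \<noteq> e2"
  have R: "is_realisation Fam R" by (rule extremal_realisation[OF ex])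
  let ?F = "\<lambda>u. if u \<in> carrier R then Some (if u = e2 then e1 else u) else None"
  have "total_map R ?F" unfolding total_map_def by auto
  then obtain H where H: "\<forall>u\<in>carrier R. ?F u = Some (H u)" "riso_fun R (merge R e1 e2) H"
    using ex rmap_merge[OF R e ne same_below lab] unfolding extremal_def iso_map_def by blast
  have "H e1 = H e2" using bspec[OF H(1) e(1)] bspec[OF H(1) e(2)] e by simp
  moreover have "inj_on H (carrier R)" using riso_funD(1)[OF H(2)] bij_betw_def by blast
  ultimately show False using e ne inj_onD by metis
qed

lemma riso_fun_restr:
  assumes h: "riso_fun A B h" and u: "u \<in> carrier A"
  shows "riso_fun (restr A u) (restr B (h u)) h"
proof -
  have hb: "bij_betw h (carrier A) (carrier B)" by (rule riso_funD(1)[OF h])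
  note ord = riso_funD(2)[OF h]
  have "inj_on h (below A u)"
    using inj_on_subset[of h "carrier A" "below A u"] hb unfolding bij_betw_def by blast
  moreover have "h ` below A u = below B (h u)"
  proof
    show "h ` below A u \<subseteq> below B (h u)"
    proof
      fix b assume "b \<in> h ` below A u"
      then obtain a where a: "a \<in> carrier A" "rord A a u" "b = h a" by blast
      then show "b \<in> below B (h u)" using bij_betwE[OF hb] ord[OF a(1) u] by simp
    qed
    show "below B (h u) \<subseteq> h ` below A u"
    proof
      fix b assume b: "b \<in> below B (h u)"
      then obtain a where a: "a \<in> carrier A" "b = h a" using hb unfolding bij_betw_def by blast
      then show "b \<in> h ` below A u" using b ord[OF a(1) u] by blast
    qed
  qed
  ultimately show ?thesis
    unfolding riso_fun_def restr_simps bij_betw_def using riso_funD(2,3)[OF h] by simp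
qed

lemma riso_fun_restr_top:
  assumes R: "is_realisation Fam R" and e: "e1 \<in> carrier R" "e2 \<in> carrier R"
    and h: "riso_fun (restr R e1) (restr R e2) h"
  shows "h e1 = e2"
proof -
  have hb: "bij_betw h (below R e1) (below R e2)" using riso_funD(1)[OF h] by simp
  have e1': "e1 \<in> below R e1" using realisationD(1)[OF R e(1)] e(1) by simp
  have "e2 \<in> below R e2" using realisationD(1)[OF R e(2)] e(2) by simp
  then have "e2 \<in> h ` below R e1" using bij_betw_imp_surj_on[OF hb] by simp
  then obtain a where a: "e2 = h a" "a \<in> below R e1" by (rule imageE)
  have "rord (restr R e1) a e1 \<longleftrightarrow> rord (restr R e2) (h a) (h e1)"
    by (rule riso_funD(2)[OF h]) (use a(2) e1' in simp_all)
  then have "rord R e2 (h e1)" using a by simp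
  moreover have "h e1 \<in> below R e2" using hb e1' bij_betwE by blast
  ultimately show ?thesis using realisationD(2)[OF R, of "h e1" e2] e(2) by blast
qed

lemma riso_fun_restr_same_below:
  assumes R: "is_realisation Fam R" and e1: "e1 \<in> carrier R"
    and h: "riso_fun (restr R e1) (restr R e2) h" and he1: "h e1 = e2"
    and fixed: "\<And>u. u \<in> below R e1 \<Longrightarrow> u \<noteq> e1 \<Longrightarrow> h u = u"
  shows "below R e1 - {e1} = below R e2 - {e2}"
proof
  have hb: "bij_betw h (below R e1) (below R e2)" using riso_funD(1)[OF h] by simp
  have e1': "e1 \<in> below R e1" using realisationD(1)[OF R e1] e1 by simp
  show "below R e1 - {e1} \<subseteq> below R e2 - {e2}"
  proof
    fix u assume u: "u \<in> below R e1 - {e1}"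
    then have "h u \<noteq> h e1"
      using hb e1' inj_onD[of h "below R e1" u e1] unfolding bij_betw_def by blast
    moreover have "h u \<in> below R e2" using hb u bij_betwE by blast
    ultimately show "u \<in> below R e2 - {e2}" using fixed[of u] u he1 by auto
  qed
  show "below R e2 - {e2} \<subseteq> below R e1 - {e1}"
  proof
    fix v assume v: "v \<in> below R e2 - {e2}"
    then have "v \<in> h ` below R e1" using bij_betw_imp_surj_on[OF hb] by simp
    then obtain a where a: "v = h a" "a \<in> below R e1" by (rule imageE)
    then have "a \<noteq> e1" using he1 v by auto
    then show "v \<in> below R e1 - {e1}" using a fixed by auto
  qed
qed

lemma extremal_restr_riso_eq:
  assumes ex: "extremal Fam R" and e: "e1 \<in> carrier R" "e2 \<in> carrier R"
    and iso: "riso Fam (restr R e1) (restr R e2)"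
  shows "e1 = e2"
  using e iso
proof (induction e2 arbitrary: e1 rule: measure_induct_rule[where f = "\<lambda>e. card (below R e)"])
  case (less e2)
  have R: "is_realisation Fam R" by (rule extremal_realisation[OF ex])
  note RR = realisationD[OF R]
  obtain h where h: "riso_fun (restr R e1) (restr R e2) h" using less.prems(3) unfolding riso_def by blast
  have hb: "bij_betw h (below R e1) (below R e2)" using riso_funD(1)[OF h] by simp
  have he1: "h e1 = e2" by (rule riso_fun_restr_top[OF R less.prems(1,2) h])
  have e1': "e1 \<in> below R e1" using less.prems(1) RR(1) by auto
  have fixed: "h u = u" if u: "u \<in> below R e1" "u \<noteq> e1" for u
  proof -
    have hu: "h u \<in> below R e2" using hb u(1) bij_betwE by blast
    have "h u \<noteq> h e1"
      using u e1' inj_onD[of h "below R e1" u e1] hb unfolding bij_betw_def by blast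
    then have "\<not> rord R e2 (h u)" using RR(2)[of "h u" e2] hu less.prems(2) he1 by auto
    then have "e2 \<notin> below R (h u)" by simp
    moreover have "below R (h u) \<subseteq> below R e2"
      using hu RR(3)[of _ "h u" e2] less.prems(2) by blast
    moreover have "e2 \<in> below R e2" using less.prems(2) RR(1) by simp
    ultimately have "below R (h u) \<subset> below R e2" by blast
    then have card: "card (below R (h u)) < card (below R e2)"
      using RR(4)[OF less.prems(2)] by (rule psubset_card_mono[rotated])
    have "riso_fun (restr (restr R e1) u) (restr (restr R e2) (h u)) h"
      using riso_fun_restr[OF h] u by simp
    then have "riso_fun (restr R u) (restr R (h u)) h"
      using restr_restr[OF R] u hu less.prems(1,2) by simp
    then have "riso Fam (restr R u) (restr R (h u))"
      using riso_funI restr_realisation[OF R] u by blast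
    then have "u = h u" using less.IH[OF card] u(1) hu by blast
    then show ?thesis by simp
  qed
  have "below R e1 - {e1} = below R e2 - {e2}"
    by (rule riso_fun_restr_same_below[OF R less.prems(1) h he1 fixed])
  moreover have "lab R e1 = lab R e2" using riso_funD(3)[OF h, of e1] e1' he1 by simp
  ultimately show ?case by (rule extremal_twins_eq[OF ex less.prems(1,2)])
qed

lemma total_rmap_the_image:
  assumes f: "rmap Fam S R' f" and tot: "total_map S f"
  shows "(\<lambda>u. the (f u)) ` carrier S = carrier R'"
proof
  show "(\<lambda>u. the (f u)) ` carrier S \<subseteq> carrier R'"
    using tot rmapD(4)[OF f] unfolding total_map_def by force
  show "carrier R' \<subseteq> (\<lambda>u. the (f u)) ` carrier S"
  proof
    fix y assume "y \<in> carrier R'"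
    then obtain u where "u \<in> carrier S" "f u = Some y" using rmapD(5)[OF f] by blast
    then show "y \<in> (\<lambda>u. the (f u)) ` carrier S" by force
  qed
qed

lemma total_rmap_restr:
  assumes coh: "coherent Fam" and f: "rmap Fam S R' f" and tot: "total_map S f"
    and q: "q \<in> carrier S" and ex: "extremal Fam (restr S q)"
  shows "\<And>r. r \<in> below S q \<Longrightarrow> rord R' (the (f r)) (the (f q))"
    and "riso Fam (restr S q) (restr R' (the (f q)))"
proof -
  obtain y where y: "f q = Some y" using tot q unfolding total_map_def by blast
  have iso: "iso_map (restr S q) (restr R' y) (restr_map S q R' y f)"
    by (rule restr_map_iso_map[OF coh ex f q y])
  show "riso Fam (restr S q) (restr R' (the (f q)))"
    using iso rmapD(1,2)[OF rmap_restr_map[OF f q y]] y riso_funI unfolding iso_map_def by auto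
  fix r assume "r \<in> below S q"
  then obtain z where "restr_map S q R' y f r = Some z" using iso unfolding iso_map_def by auto
  then show "rord R' (the (f r)) (the (f q))" using y by (simp add: restr_map_Some_iff)
qed

lemma ex_riso_fun_nat:
  fixes R :: "('e, 'a) real"
  assumes fin: "finite (carrier R)"
  shows "\<exists>(Rn :: (nat, 'a) real) g. riso_fun R Rn g"
proof -
  obtain h where h: "bij_betw h {0..<card (carrier R)} (carrier R)"
    using ex_bij_betw_nat_finite[OF fin] by blast
  define Rn :: "(nat, 'a) real" where
    "Rn = \<lparr>carrier = {0..<card (carrier R)}, rord = \<lambda>i j. rord R (h i) (h j), lab = \<lambda>i. lab R (h i)\<rparr>"
  have "riso_fun Rn R h" unfolding riso_fun_def Rn_def using h by simp
  then show ?thesis using riso_fun_inv by blast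
qed

section \<open>The order of extremal realisations and the configurations of er(A)\<close>

locale er_setting =
  fixes Fam :: "'a set set" and P :: "(nat, 'a) real set"
  assumes coh: "coherent Fam" and reps: "er_reps Fam P"
begin

lemma P_extremal: "p \<in> P \<Longrightarrow> extremal Fam p"
  and P_has_top: "p \<in> P \<Longrightarrow> has_top p"
  using reps unfolding er_reps_def by blast+

lemma P_realisation: "p \<in> P \<Longrightarrow> is_realisation Fam p"
  using P_extremal extremal_realisation by blast

lemma P_riso_eq:
  assumes "p \<in> P" "q \<in> P" "riso Fam p q"
  shows "p = q"
proof -
  have "\<exists>!p'. p' \<in> P \<and> riso Fam p p'"
    using reps P_extremal[OF assms(1)] P_has_top[OF assms(1)] unfolding er_reps_def by blast
  moreover have "riso Fam p p" by (rule riso_refl[OF P_realisation[OF assms(1)]])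
  ultimately show ?thesis using assms by blast
qed

lemma ex_P_riso:
  fixes R :: "('e, 'a) real"
  assumes ex: "extremal Fam R" and top: "has_top R"
  shows "\<exists>p\<in>P. riso Fam R p"
proof -
  have R: "is_realisation Fam R" by (rule extremal_realisation[OF ex])
  obtain Rn :: "(nat, 'a) real" and g where g: "riso_fun R Rn g"
    using ex_riso_fun_nat[OF has_top_finite[OF R top]] by blast
  have "extremal Fam Rn" "has_top Rn"
    using extremal_riso_fun[OF ex g] riso_fun_has_top(1)[OF g R top] by auto
  then obtain p where "p \<in> P" "riso Fam Rn p" using reps unfolding er_reps_def by blast
  then show ?thesis using riso_trans riso_funI[OF g R] by blast
qed

definition rep :: "('e, 'a) real \<Rightarrow> 'e \<Rightarrow> (nat, 'a) real" where
  "rep R e = (SOME p. p \<in> P \<and> riso Fam (restr R e) p)"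

context
  fixes R :: "('e, 'a) real"
  assumes ex: "extremal Fam R"
begin

private lemma R_realisation: "is_realisation Fam R"
  by (rule extremal_realisation[OF ex])

lemma rep:
  assumes e: "e \<in> carrier R"
  shows "rep R e \<in> P \<and> riso Fam (restr R e) (rep R e)"
proof -
  have "\<exists>p. p \<in> P \<and> riso Fam (restr R e) p"
    using ex_P_riso[OF restr_extremal[OF coh ex e] restr_has_top(1)[OF R_realisation e]] by blast
  then show ?thesis unfolding rep_def by (rule someI_ex)
qed

lemma rep_eqI:
  assumes e: "e \<in> carrier R" and p: "p \<in> P" "riso Fam (restr R e) p"
  shows "p = rep R e"
  using P_riso_eq[OF p(1)] rep[OF e] riso_trans[OF riso_sym[OF p(2)]] by blast

lemma rle_iff_in_rep_image:
  assumes p: "p \<in> P"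
  shows "rle Fam p R \<longleftrightarrow> p \<in> rep R ` carrier R"
proof -
  have "rle Fam p R \<longleftrightarrow> (\<exists>e\<in>carrier R. riso Fam (restr R e) p)"
    by (rule rle_iff_riso_restr[OF coh ex P_realisation[OF p] P_has_top[OF p]])
  also have "\<dots> \<longleftrightarrow> p \<in> rep R ` carrier R"
    using rep rep_eqI p by blast
  finally show ?thesis .
qed

lemma rord_iff_rle_rep:
  assumes e: "e1 \<in> carrier R" "e2 \<in> carrier R"
  shows "rord R e1 e2 \<longleftrightarrow> rle Fam (rep R e1) (rep R e2)"
proof
  assume o: "rord R e1 e2"
  have "rle Fam (restr (restr R e2) e1) (restr R e2)"
    by (rule rle_restr[OF restr_realisation[OF R_realisation e(2)]]) (use e o in simp)
  then have "rle Fam (restr R e1) (restr R e2)" using restr_restr[OF R_realisation e o] by simp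
  then show "rle Fam (rep R e1) (rep R e2)"
    using rle_trans riso_rle rep[OF e(1)] rep[OF e(2)] by metis
next
  assume o: "rle Fam (rep R e1) (rep R e2)"
  have "rle Fam (rep R e1) (restr R e2)" using rle_trans[OF o] riso_rle(2) rep[OF e(2)] by blast
  then obtain e where e': "e \<in> below R e2" "riso Fam (restr (restr R e2) e) (rep R e1)"
    using rle_iff_riso_restr[OF coh restr_extremal[OF coh ex e(2)]] rep[OF e(1)]
      P_realisation P_has_top by fastforce
  then have "riso Fam (restr R e) (restr R e1)"
    using restr_restr[OF R_realisation _ e(2)] riso_trans riso_sym rep[OF e(1)] by fastforce
  then have "e = e1" using extremal_restr_riso_eq[OF ex] e' e(1) by blast
  then show "rord R e1 e2" using e' by simp
qed

lemma inj_on_rep: "inj_on (rep R) (carrier R)"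
proof (rule inj_onI)
  fix e1 e2 assume e: "e1 \<in> carrier R" "e2 \<in> carrier R" "rep R e1 = rep R e2"
  then have "riso Fam (restr R e1) (restr R e2)" using rep riso_trans riso_sym by metis
  then show "e1 = e2" by (rule extremal_restr_riso_eq[OF ex e(1,2)])
qed

lemma maxA_rep: "e \<in> carrier R \<Longrightarrow> maxA (rep R e) = lab R e"
  using rep riso_fun_has_top(2) restr_has_top[OF R_realisation] restr_realisation[OF R_realisation]
  unfolding riso_def by metis

lemma riso_fun_real_of_config_below:
  "riso_fun R (real_of_config Fam {p\<in>P. rle Fam p R}) (rep R)"
proof -
  have "{p\<in>P. rle Fam p R} = rep R ` carrier R"
    using rle_iff_in_rep_image rep by blast
  then show ?thesis unfolding riso_fun_def real_of_config_def
    using inj_on_rep rord_iff_rle_rep maxA_rep by (simp add: bij_betw_def)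
qed

lemma below_configsP: "{p\<in>P. rle Fam p R} \<in> configsP Fam P"
proof -
  define X where "X = {p\<in>P. rle Fam p R}"
  have "X \<in> configsP Fam P" unfolding configsP_def
  proof (intro CollectI conjI allI impI ballI)
    fix p p' assume "p \<in> X" "p' \<in> P" "rle Fam p' p"
    then show "p' \<in> X" using rle_trans unfolding X_def by blast
  next
    fix Y assume Y: "finite Y \<and> Y \<subseteq> X"
    txt \<open>The down-closure of Y in P is the image under rep of a down-closed subset of R.\<close>
    define Z where "Z = {u \<in> carrier R. rep R u \<in> downP Fam P Y}"
    have "down_closed R Z" unfolding down_closed_def
    proof (intro conjI ballI impI)
      fix v u assume v: "v \<in> Z" and u: "u \<in> carrier R" "rord R u v"
      then obtain q where q: "q \<in> Y" "rle Fam (rep R v) q" unfolding Z_def downP_def by blast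
      have "rle Fam (rep R u) (rep R v)" using rord_iff_rle_rep u v unfolding Z_def by blast
      then show "u \<in> Z" unfolding Z_def downP_def using u rep q rle_trans by blast
    qed (auto simp: Z_def)
    moreover have "downP Fam P Y = rep R ` Z"
      using Y rle_trans rle_iff_in_rep_image rep unfolding X_def Z_def downP_def by blast
    moreover have "maxA ` rep R ` Z = lab R ` Z"
      unfolding image_image using maxA_rep by (intro image_cong) (auto simp: Z_def)
    ultimately have "maxA ` downP Fam P Y \<in> Fam" using realisationD(6)[OF R_realisation] by simp
    then show "ConP Fam P Y" unfolding ConP_def using Y X_def by auto
  qed (auto simp: X_def)
  then show ?thesis unfolding X_def .
qed

end

lemma riso_real_of_config_below:
  assumes p: "p \<in> P"
  shows "riso Fam p (real_of_config Fam {r\<in>P. rle Fam r p})"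
  using riso_funI[OF riso_fun_real_of_config_below[OF P_extremal[OF p]] P_realisation[OF p]] .

lemma rle_antisym:
  assumes p: "p \<in> P" and q: "q \<in> P" and "rle Fam p q" "rle Fam q p"
  shows "p = q"
proof -
  have "{r\<in>P. rle Fam r p} = {r\<in>P. rle Fam r q}" using assms rle_trans by blast
  then have "riso Fam p (real_of_config Fam {r\<in>P. rle Fam r q})"
    using riso_real_of_config_below[OF p] by simp
  then have "riso Fam p q" using riso_trans riso_sym[OF riso_real_of_config_below[OF q]] by blast
  then show ?thesis by (rule P_riso_eq[OF p q])
qed

lemma finite_below_P:
  assumes p: "p \<in> P"
  shows "finite {r\<in>P. rle Fam r p}"
proof -
  have "bij_betw (rep p) (carrier p) {r\<in>P. rle Fam r p}"
    using riso_funD(1)[OF riso_fun_real_of_config_below[OF P_extremal[OF p]]]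
    unfolding real_of_config_def by simp
  then show ?thesis
    using has_top_finite[OF P_realisation[OF p] P_has_top[OF p]] bij_betw_finite by blast
qed

lemma maxA_in_Union:
  assumes p: "p \<in> P"
  shows "maxA p \<in> \<Union>Fam"
proof -
  obtain t where t: "t \<in> carrier p" "\<forall>u\<in>carrier p. rord p u t"
    using P_has_top[OF p] unfolding has_top_def by blast
  then show ?thesis
    using maxA_eq[OF P_realisation[OF p] t] realisationD(5)[OF P_realisation[OF p] t(1)] by simp
qed

lemma configsP_D:
  assumes "x \<in> configsP Fam P"
  shows "x \<subseteq> P" "\<And>p p'. p \<in> x \<Longrightarrow> p' \<in> P \<Longrightarrow> rle Fam p' p \<Longrightarrow> p' \<in> x"
    "\<And>X. finite X \<Longrightarrow> X \<subseteq> x \<Longrightarrow> ConP Fam P X"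
  using assms unfolding configsP_def by blast+

lemma real_of_config_simps [simp]:
  "carrier (real_of_config Fam x) = x" "rord (real_of_config Fam x) = rle Fam"
  "lab (real_of_config Fam x) = maxA"
  by (simp_all add: real_of_config_def)

lemma real_of_config_realisation:
  assumes x: "x \<in> configsP Fam P"
  shows "is_realisation Fam (real_of_config Fam x)"
proof (rule is_realisationI)
  note X = configsP_D[OF x]
  fix z assume "down_closed (real_of_config Fam x) z"
  then have zx: "z \<subseteq> x" and zd: "\<And>v u. v \<in> z \<Longrightarrow> u \<in> x \<Longrightarrow> rle Fam u v \<Longrightarrow> u \<in> z"
    unfolding down_closed_def by auto
  show "lab (real_of_config Fam x) ` z \<in> Fam" unfolding real_of_config_simps
  proof (rule coherentD[OF coh])
    fix F assume F: "finite F" "F \<subseteq> maxA ` z"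
    then obtain Y where Y: "Y \<subseteq> z" "finite Y" "F = maxA ` Y" by (meson finite_subset_image)
    then have "maxA ` downP Fam P Y \<in> Fam" using X(3) zx unfolding ConP_def by blast
    moreover have "Y \<subseteq> downP Fam P Y" unfolding downP_def using Y(1) zx X(1) rle_refl P_realisation by blast
    ultimately show "\<exists>W\<in>Fam. F \<subseteq> W" using Y(3) by blast
  next
    fix a assume "a \<in> maxA ` z"
    then obtain p where p: "p \<in> z" "a = maxA p" by blast
    have px: "p \<in> x" "p \<in> P" using p zx X(1) by auto
    have "maxA ` downP Fam P {p} \<in> Fam" using X(3)[of "{p}"] px unfolding ConP_def by blast
    moreover have "p \<in> downP Fam P {p}" unfolding downP_def using px rle_refl P_realisation by blast
    moreover have "downP Fam P {p} \<subseteq> z" using X(2)[OF px(1)] zd[OF p(1)] unfolding downP_def by blast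
    ultimately show "\<exists>Y\<in>Fam. a \<in> Y \<and> Y \<subseteq> maxA ` z"
      using p(2) by (intro bexI[of _ "maxA ` downP Fam P {p}"] conjI) blast+
  qed
next
  fix p assume "p \<in> carrier (real_of_config Fam x)"
  then have p: "p \<in> P" using configsP_D(1)[OF x] by auto
  have "below (real_of_config Fam x) p \<subseteq> {r\<in>P. rle Fam r p}" using configsP_D(1)[OF x] by auto
  then show "finite (below (real_of_config Fam x) p)" using finite_below_P[OF p] by (rule finite_subset)
next
  fix p assume "p \<in> carrier (real_of_config Fam x)"
  then have "p \<in> P" using configsP_D(1)[OF x] by auto
  then show "rord (real_of_config Fam x) p p" "lab (real_of_config Fam x) p \<in> \<Union>Fam"
    using rle_refl[OF P_realisation] maxA_in_Union by simp_all
next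
  fix p q assume "p \<in> carrier (real_of_config Fam x)" "q \<in> carrier (real_of_config Fam x)"
    "rord (real_of_config Fam x) p q" "rord (real_of_config Fam x) q p"
  then show "p = q" using rle_antisym configsP_D(1)[OF x] by auto
next
  fix p q r assume "rord (real_of_config Fam x) p q" "rord (real_of_config Fam x) q r"
  then show "rord (real_of_config Fam x) p r" using rle_trans by simp
qed

lemma restr_real_of_config:
  assumes x: "x \<in> configsP Fam P" and q: "q \<in> x"
  shows "restr (real_of_config Fam x) q = real_of_config Fam {r\<in>P. rle Fam r q}"
proof -
  have "{u \<in> x. rle Fam u q} = {r\<in>P. rle Fam r q}" using configsP_D(1,2)[OF x] q by blast
  then show ?thesis unfolding restr_def real_of_config_def by simp
qed

lemma riso_restr_real_of_config:
  assumes x: "x \<in> configsP Fam P" and q: "q \<in> x"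
  shows "riso Fam q (restr (real_of_config Fam x) q)"
  using riso_real_of_config_below configsP_D(1)[OF x] q restr_real_of_config[OF x q] by auto

lemma real_of_config_extremal:
  assumes x: "x \<in> configsP Fam P"
  shows "extremal Fam (real_of_config Fam x)"
  unfolding extremal_def
proof (intro conjI allI impI)
  let ?S = "real_of_config Fam x"
  note X = configsP_D[OF x]
  show "is_realisation Fam ?S" by (rule real_of_config_realisation[OF x])
  fix R' :: "((nat, 'a) real, 'a) real" and f
  assume "rmap Fam ?S R' f \<and> total_map ?S f"
  then have f: "rmap Fam ?S R' f" and tot: "total_map ?S f" by auto
  define g where "g p = the (f p)" for p
  have fg: "f p = Some (g p)" "g p \<in> carrier R'" if "p \<in> x" for p
    using tot rmapD(4)[OF f] that unfolding total_map_def g_def by auto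
  have ex_restr: "extremal Fam (restr ?S q)" if "q \<in> x" for q
    using extremal_riso[OF riso_restr_real_of_config[OF x that] P_extremal] X(1) that by blast
  have mono: "rord R' (g r) (g q)" if "q \<in> x" "r \<in> below ?S q" for q r
    using total_rmap_restr(1)[OF coh f tot _ ex_restr] that unfolding g_def by simp
  have loc: "riso Fam (restr ?S q) (restr R' (g q))" if "q \<in> x" for q
    using total_rmap_restr(2)[OF coh f tot _ ex_restr] that unfolding g_def by simp
  have inj: "inj_on g x"
  proof (rule inj_onI)
    fix p q assume pq: "p \<in> x" "q \<in> x" "g p = g q"
    have "riso Fam (restr R' (g p)) (restr ?S q)" using riso_sym[OF loc[OF pq(2)]] pq(3) by simp
    then have "riso Fam (restr ?S p) (restr ?S q)" by (rule riso_trans[OF loc[OF pq(1)]])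
    then have "riso Fam p q"
      using riso_trans[OF riso_trans[OF riso_restr_real_of_config[OF x pq(1)]]
          riso_sym[OF riso_restr_real_of_config[OF x pq(2)]]] by blast
    then show "p = q" using P_riso_eq X(1) pq by blast
  qed
  have ord: "rle Fam p q \<longleftrightarrow> rord R' (g p) (g q)" if pq: "p \<in> x" "q \<in> x" for p q
  proof
    assume "rle Fam p q"
    then show "rord R' (g p) (g q)" using mono[of q p] pq by simp
  next
    assume "rord R' (g p) (g q)"
    then obtain r where r: "r \<in> below ?S q" "f r = Some (g p)"
      using rmap_lift_below[OF f _ fg(1)[OF pq(2)] fg(2)[OF pq(1)]] pq(2) by auto
    then have "r = p" using inj pq(1) fg(1)[of r] by (auto dest: inj_onD)
    then show "rle Fam p q" using r by simp
  qed
  have "g ` x = carrier R'" using total_rmap_the_image[OF f tot] unfolding g_def by simp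
  moreover have "lab R' (g p) = maxA p" if "p \<in> x" for p
    using rmapD(7)[OF f fg(1)[OF that]] by simp
  ultimately have "riso_fun ?S R' g"
    unfolding riso_fun_def bij_betw_def real_of_config_simps using inj ord by blast
  then show "iso_map ?S R' f" unfolding iso_map_def using fg by auto
qed

lemma below_real_of_config:
  assumes x: "x \<in> configsP Fam P"
  shows "{p\<in>P. rle Fam p (real_of_config Fam x)} = x"
proof
  let ?S = "real_of_config Fam x"
  have ex: "extremal Fam ?S" by (rule real_of_config_extremal[OF x])
  show "x \<subseteq> {p\<in>P. rle Fam p ?S}"
  proof
    fix p assume p: "p \<in> x"
    have "rle Fam p (restr ?S p)" using riso_rle(1) riso_restr_real_of_config[OF x p] by blast
    moreover have "rle Fam (restr ?S p) ?S"
      by (rule rle_restr[OF extremal_realisation[OF ex]]) (use p in simp)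
    ultimately show "p \<in> {p\<in>P. rle Fam p ?S}" using p configsP_D(1)[OF x] rle_trans by blast
  qed
  show "{p\<in>P. rle Fam p ?S} \<subseteq> x"
  proof
    fix p assume "p \<in> {p\<in>P. rle Fam p ?S}"
    then have p: "p \<in> P" "rle Fam p ?S" by auto
    then obtain q where q: "q \<in> x" "riso Fam (restr ?S q) p"
      using rle_iff_riso_restr[OF coh ex P_realisation[OF p(1)] P_has_top[OF p(1)]] by auto
    then have "riso Fam q p" using riso_trans riso_restr_real_of_config[OF x] by blast
    then show "p \<in> x" using P_riso_eq configsP_D(1)[OF x] q(1) p(1) by blast
  qed
qed

lemma rle_real_of_config_iff_subset:
  assumes x: "x \<in> configsP Fam P" and y: "y \<in> configsP Fam P"
  shows "rle Fam (real_of_config Fam x) (real_of_config Fam y) \<longleftrightarrow> x \<subseteq> y"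
proof
  assume xy: "rle Fam (real_of_config Fam x) (real_of_config Fam y)"
  show "x \<subseteq> y"
  proof
    fix p assume "p \<in> x"
    then have "p \<in> P" "rle Fam p (real_of_config Fam x)" using below_real_of_config[OF x] by auto
    then have "p \<in> {p\<in>P. rle Fam p (real_of_config Fam y)}" using rle_trans[OF _ xy] by blast
    then show "p \<in> y" using below_real_of_config[OF y] by simp
  qed
next
  assume xy: "x \<subseteq> y"
  define f where "f u = (if u \<in> x then Some u else None)" for u
  have "rmap Fam (real_of_config Fam y) (real_of_config Fam x) f" unfolding rmap_def
  proof (intro conjI allI impI ballI)
    fix z assume "down_closed (real_of_config Fam y) z"
    moreover have "pimage f z = z \<inter> x" unfolding f_def by auto
    ultimately show "down_closed (real_of_config Fam x) (pimage f z)"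
      using xy unfolding down_closed_def by auto
  qed (use xy x y real_of_config_realisation in \<open>auto simp: f_def split: if_splits\<close>)
  then show "rle Fam (real_of_config Fam x) (real_of_config Fam y)" unfolding rle_def by blast
qed

lemma rle_iff_below_subset:
  fixes R :: "('e, 'a) real" and R' :: "('f, 'a) real"
  assumes ex: "extremal Fam R" and ex': "extremal Fam R'"
  shows "rle Fam R R' \<longleftrightarrow> {p\<in>P. rle Fam p R} \<subseteq> {p\<in>P. rle Fam p R'}"
proof
  assume "rle Fam R R'"
  then show "{p\<in>P. rle Fam p R} \<subseteq> {p\<in>P. rle Fam p R'}" using rle_trans by blast
next
  assume "{p\<in>P. rle Fam p R} \<subseteq> {p\<in>P. rle Fam p R'}"
  then have "rle Fam (real_of_config Fam {p\<in>P. rle Fam p R}) (real_of_config Fam {p\<in>P. rle Fam p R'})"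
    using rle_real_of_config_iff_subset[OF below_configsP[OF ex] below_configsP[OF ex']] by blast
  moreover have "riso Fam R (real_of_config Fam {p\<in>P. rle Fam p R})"
    by (rule riso_funI[OF riso_fun_real_of_config_below[OF ex] extremal_realisation[OF ex]])
  moreover have "riso Fam R' (real_of_config Fam {p\<in>P. rle Fam p R'})"
    by (rule riso_funI[OF riso_fun_real_of_config_below[OF ex'] extremal_realisation[OF ex']])
  ultimately show "rle Fam R R'"
    using rle_trans[OF rle_trans[OF riso_rle(1)] riso_rle(2)] by blast
qed

end

theorem mainTheorem1:
  fixes E :: "'a set" and Con :: "'a set set" and ent :: "'a set \<Rightarrow> 'a \<Rightarrow> bool"
    and P :: "(nat, 'a) real set"
  assumes "ges E Con ent"
    and "er_reps (configs E Con ent) P"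
  shows
    "(\<forall>x \<in> configsP (configs E Con ent) P.
        extremal (configs E Con ent) (real_of_config (configs E Con ent) x) \<and>
        {p\<in>P. rle (configs E Con ent) p (real_of_config (configs E Con ent) x)} = x)
   \<and> (\<forall>R :: ('e, 'a) real. extremal (configs E Con ent) R \<longrightarrow>
        {p\<in>P. rle (configs E Con ent) p R} \<in> configsP (configs E Con ent) P \<and>
        riso (configs E Con ent) R
          (real_of_config (configs E Con ent) {p\<in>P. rle (configs E Con ent) p R}))
   \<and> (\<forall>(R :: ('e, 'a) real) (R' :: ('f, 'a) real).
        extremal (configs E Con ent) R \<and> extremal (configs E Con ent) R' \<longrightarrow>
        (rle (configs E Con ent) R R' \<longleftrightarrow>
         {p\<in>P. rle (configs E Con ent) p R} \<subseteq> {p\<in>P. rle (configs E Con ent) p R'}))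
   \<and> (\<forall>x \<in> configsP (configs E Con ent) P. \<forall>y \<in> configsP (configs E Con ent) P.
        x \<subseteq> y \<longleftrightarrow> rle (configs E Con ent) (real_of_config (configs E Con ent) x)
                                      (real_of_config (configs E Con ent) y))"
proof -
  interpret er_setting "configs E Con ent" P
    using coherent_configs assms(2) by unfold_locales
  show ?thesis
  proof (intro conjI ballI allI impI)
    fix R :: "('e, 'a) real" assume ex: "extremal (configs E Con ent) R"
    show "{p\<in>P. rle (configs E Con ent) p R} \<in> configsP (configs E Con ent) P"
      by (rule below_configsP[OF ex])
    show "riso (configs E Con ent) R
        (real_of_config (configs E Con ent) {p\<in>P. rle (configs E Con ent) p R})"
      by (rule riso_funI[OF riso_fun_real_of_config_below[OF ex] extremal_realisation[OF ex]])
  next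
    fix R :: "('e, 'a) real" and R' :: "('f, 'a) real"
    assume "extremal (configs E Con ent) R \<and> extremal (configs E Con ent) R'"
    then show "rle (configs E Con ent) R R' \<longleftrightarrow>
        {p\<in>P. rle (configs E Con ent) p R} \<subseteq> {p\<in>P. rle (configs E Con ent) p R'}"
      using rle_iff_below_subset by blast
  qed (simp_all add: real_of_config_extremal below_real_of_config rle_real_of_config_iff_subset)
qed

end
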